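(* Let $n\ge 3$, let $m_1,m_2$ be positive integers with $m_1\mid m_2$, and let $F,R$ be as in the context. Consider the following list of elements of $F$, each with an attached number $N$: $[s_i(1),s_i(x)]$ ($1\le i\le n-1$), $N=m_1$; for $1\le i<j-1\le n-2$: $[s_i(1),s_j(1)]$, $N=m_2$; $[s_i(x),s_j(x)][s_i(1),s_j(1)]^{-1}$, $[s_i(x),s_j(1)][s_i(x),s_j(x)]^{-1}$, $[s_i(1),s_j(x)][s_i(x),s_j(x)]^{-1}$, each $N=m_1$; for $1\le i\le n-2$: $[s_i(1),s_{i+1}(x)][s_i(x),s_{i+1}(1)]^{-1}$ and $[s_i(x),s_{i+1}(x)][s_i(x),s_{i+1}(1)]^{-1}$, each $N=m_1$; $[s_i(1),s_{i+1}(1),s_i(1)]$, $N=m_2$; $[s_i(1),s_{i+1}(1),s_{i+1}(1)s_i(1)^{-1}]$, $N=\gcd(m_2,\binom{m_2}{2})$; $[s_i(1),s_{i+1}(1),s_i(x)s_i(1)^{-1}]$, $N=m_1$; $[s_i(1),s_{i+1}(1),s_i(x)s_{i+1}(x)^{-1}(s_i(1)s_{i+1}(1)^{-1})^{-1}]$, $N=\gcd(m_1,\binom{m_1}{2})$; for $1\le i\le n-3$: $[s_i(1),s_{i+1}(1),s_{i+2}(1),s_{i+1}(1)]$, $N=\gcd(2,m_2)$; $[s_i(1),s_{i+1}(1),s_{i+2}(1),s_{i+1}(x)s_{i+1}(1)^{-1}]$, $N=\gcd(2,m_1)$. If a product (in any order) of integer powers of these elements, each element occurring once, lies in $[R,F]$,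 then the exponent of each element is divisible by its attached number $N$.
   Context: Commutator conventions: $[a,b]=a^{-1}b^{-1}ab$, commutators left-normed: $[a_1,\dots,a_k]=[[a_1,\dots,a_{k-1}],a_k]$. Let $F$ be the free group on the $2(n-1)$ symbols $s_i(1),s_i(x)$, $1\le i\le n-1$. Write $s_i(1|x)$ for either of $s_i(1),s_i(x)$ (every choice is included). Let $R$ be the normal closure in $F$ of: $s_i(1)^{m_1}s_i(x)^{-m_1}$ and $s_i(x)^{m_2}$ ($1\le i\le n-1$); $[s_i(1),s_i(x)]$ ($1\le i\le n-1$); $[s_i(1|x),s_j(1|x)]$ ($1\le i<j-1\le n-2$); $[s_i(1|x)^{-1},s_{i+1}(x)^{-1}][s_i(x),s_{i+1}(1)]^{-1}$ ($1\le i\le n-2$); $[s_i(1|x),s_{i+1}(1),s_i(1)]$ and $[s_i(1|x),s_{i+1}(1),s_{i+1}(1)]$ ($1\le i\le n-2$); $[[s_i(1|x),s_{i+1}(1)],[s_{i+1}(1|x),s_{i+2}(1)]]$ ($1\le i\le n-3$). It is known that $F/R\cong\mathrm{UT}_n(\mathbb Z/m_1\mathbb Z\times\mathbb Z/m_2\mathbb Z)$ via $s_i(\lambda)\mapsto I+\lambda E_{i,i+1}$, where $1=(1,1)$ and $x=(0,1)$. *)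

theory Defs
  imports "HOL-Algebra.Algebra"
begin

text \<open>A letter is a pair (inverted?, generator). A word is a list of letters.\<close>

type_synonym 'a letter = "bool \<times> 'a"

definition inv_letter :: "'a letter \<Rightarrow> 'a letter" where
  "inv_letter l = (\<not> fst l, snd l)"

fun cons_red :: "'a letter \<Rightarrow> 'a letter list \<Rightarrow> 'a letter list" where
  "cons_red a [] = [a]"
| "cons_red a (b # ys) = (if b = inv_letter a then ys else a # b # ys)"

definition reduce :: "'a letter list \<Rightarrow> 'a letter list" where
  "reduce xs = foldr cons_red xs []"

fun reduced :: "'a letter list \<Rightarrow> bool" where
  "reduced [] = True"
| "reduced [a] = True"
| "reduced (a # b # ys) = (b \<noteq> inv_letter a \<and> reduced (b # ys))"

definition free_grp :: "'a set \<Rightarrow> 'a letter list monoid" where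
  "free_grp S = \<lparr> carrier = {w. reduced w \<and> snd ` set w \<subseteq> S},
                  monoid.mult = (\<lambda>u v. reduce (u @ v)),
                  one = [] \<rparr>"

definition gen_word :: "'a \<Rightarrow> 'a letter list" where
  "gen_word a = [(False, a)]"

text \<open>Convention: [a,b] = a^-1 b^-1 a b.\<close>

definition comm :: "('g, 'b) monoid_scheme \<Rightarrow> 'g \<Rightarrow> 'g \<Rightarrow> 'g" where
  "comm G a b = inv\<^bsub>G\<^esub> a \<otimes>\<^bsub>G\<^esub> inv\<^bsub>G\<^esub> b \<otimes>\<^bsub>G\<^esub> a \<otimes>\<^bsub>G\<^esub> b"

definition comm3 :: "('g, 'b) monoid_scheme \<Rightarrow> 'g \<Rightarrow> 'g \<Rightarrow> 'g \<Rightarrow> 'g" where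
  "comm3 G a b c = comm G (comm G a b) c"

definition comm4 :: "('g, 'b) monoid_scheme \<Rightarrow> 'g \<Rightarrow> 'g \<Rightarrow> 'g \<Rightarrow> 'g \<Rightarrow> 'g" where
  "comm4 G a b c d = comm G (comm3 G a b c) d"

definition normal_closure :: "('g, 'b) monoid_scheme \<Rightarrow> 'g set \<Rightarrow> 'g set" where
  "normal_closure G A = generate G {g \<otimes>\<^bsub>G\<^esub> a \<otimes>\<^bsub>G\<^esub> inv\<^bsub>G\<^esub> g | g a. g \<in> carrier G \<and> a \<in> A}"

definition comm_subgroup :: "('g, 'b) monoid_scheme \<Rightarrow> 'g set \<Rightarrow> 'g set \<Rightarrow> 'g set" where
  "comm_subgroup G A B = generate G {comm G a b | a b. a \<in> A \<and> b \<in> B}"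

definition list_prod :: "('g, 'b) monoid_scheme \<Rightarrow> 'g list \<Rightarrow> 'g" where
  "list_prod G xs = foldr (\<lambda>a b. a \<otimes>\<^bsub>G\<^esub> b) xs \<one>\<^bsub>G\<^esub>"

text \<open>Generators: (i, False) stands for s_i(1), (i, True) for s_i(x), 1 <= i <= n-1.\<close>

definition UT_gens :: "nat \<Rightarrow> (nat \<times> bool) set" where
  "UT_gens n = {(i, b). 1 \<le> i \<and> i \<le> n - 1}"

definition FF :: "nat \<Rightarrow> (nat \<times> bool) letter list monoid" where
  "FF n = free_grp (UT_gens n)"

definition s1 :: "nat \<Rightarrow> (nat \<times> bool) letter list" where "s1 i = gen_word (i, False)"
definition sx :: "nat \<Rightarrow> (nat \<times> bool) letter list" where "sx i = gen_word (i, True)"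
definition sb :: "nat \<Rightarrow> bool \<Rightarrow> (nat \<times> bool) letter list" where "sb i b = gen_word (i, b)"

definition UT_rels :: "nat \<Rightarrow> nat \<Rightarrow> nat \<Rightarrow> (nat \<times> bool) letter list set" where
  "UT_rels n m1 m2 = (let G = FF n in
      {s1 i [^]\<^bsub>G\<^esub> m1 \<otimes>\<^bsub>G\<^esub> inv\<^bsub>G\<^esub> (sx i [^]\<^bsub>G\<^esub> m1) | i. 1 \<le> i \<and> i \<le> n - 1}
    \<union> {sx i [^]\<^bsub>G\<^esub> m2 | i. 1 \<le> i \<and> i \<le> n - 1}
    \<union> {comm G (s1 i) (sx i) | i. 1 \<le> i \<and> i \<le> n - 1}
    \<union> {comm G (sb i a) (sb j b) | i j a b. 1 \<le> i \<and> i + 1 < j \<and> j \<le> n - 1}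
    \<union> {comm G (inv\<^bsub>G\<^esub> (sb i a)) (inv\<^bsub>G\<^esub> (sx (i+1))) \<otimes>\<^bsub>G\<^esub> inv\<^bsub>G\<^esub> (comm G (sx i) (s1 (i+1)))
         | i a. 1 \<le> i \<and> i \<le> n - 2}
    \<union> {comm3 G (sb i a) (s1 (i+1)) (s1 i) | i a. 1 \<le> i \<and> i \<le> n - 2}
    \<union> {comm3 G (sb i a) (s1 (i+1)) (s1 (i+1)) | i a. 1 \<le> i \<and> i \<le> n - 2}
    \<union> {comm G (comm G (sb i a) (s1 (i+1))) (comm G (sb (i+1) b) (s1 (i+2)))
         | i a b. 1 \<le> i \<and> i \<le> n - 3})"

definition RR :: "nat \<Rightarrow> nat \<Rightarrow> nat \<Rightarrow> (nat \<times> bool) letter list set" where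
  "RR n m1 m2 = normal_closure (FF n) (UT_rels n m1 m2)"

definition elem_list :: "nat \<Rightarrow> nat \<Rightarrow> nat \<Rightarrow> ((nat \<times> bool) letter list \<times> nat) list" where
  "elem_list n m1 m2 = (let G = FF n; c = comm G; c3 = comm3 G; c4 = comm4 G;
       iv = (\<lambda>a. inv\<^bsub>G\<^esub> a); mul = (\<lambda>a b. a \<otimes>\<^bsub>G\<^esub> b) in
     [(c (s1 i) (sx i), m1). i \<leftarrow> [1..<n]]
   @ concat [concat [
       [(c (s1 i) (s1 j), m2),
        (mul (c (sx i) (sx j)) (iv (c (s1 i) (s1 j))), m1),
        (mul (c (sx i) (s1 j)) (iv (c (sx i) (sx j))), m1),
        (mul (c (s1 i) (sx j)) (iv (c (sx i) (sx j))), m1)]. j \<leftarrow> [i+2..<n]]. i \<leftarrow> [1..<n]]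
   @ concat [
       [(mul (c (s1 i) (sx (i+1))) (iv (c (sx i) (s1 (i+1)))), m1),
        (mul (c (sx i) (sx (i+1))) (iv (c (sx i) (s1 (i+1)))), m1),
        (c3 (s1 i) (s1 (i+1)) (s1 i), m2),
        (c3 (s1 i) (s1 (i+1)) (mul (s1 (i+1)) (iv (s1 i))), gcd m2 (m2 choose 2)),
        (c3 (s1 i) (s1 (i+1)) (mul (sx i) (iv (s1 i))), m1),
        (c3 (s1 i) (s1 (i+1))
           (mul (mul (sx i) (iv (sx (i+1)))) (iv (mul (s1 i) (iv (s1 (i+1)))))),
         gcd m1 (m1 choose 2))]. i \<leftarrow> [1..<n-1]]
   @ concat [
       [(c4 (s1 i) (s1 (i+1)) (s1 (i+2)) (s1 (i+1)), gcd 2 m2),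
        (c4 (s1 i) (s1 (i+1)) (s1 (i+2)) (mul (sx (i+1)) (iv (s1 (i+1)))), gcd 2 m1)].
       i \<leftarrow> [1..<n-2]])"

end

theory Submission
  imports Defs
begin

text \<open>For each element of the list we choose images in \<open>UT\<^sub>5(\<int>)\<close> of the generators
  \<open>s\<^sub>i(1), s\<^sub>i(x)\<close> and a subgroup \<open>K\<close> of \<open>UT\<^sub>5(\<int>)\<close> that is normalised by these images and
  contains the commutator of the image of every relator with the image of every generator.
  Then the elements \<open>r\<close> of \<open>F\<close> whose image commutes modulo \<open>K\<close> with the image of \<open>F\<close> form a
  normal subgroup containing the relators, so the induced homomorphism maps \<open>[R, F]\<close> into \<open>K\<close>.
  All other elements of the list are mapped into \<open>K\<close>, and the chosen one to a matrix with
  only the corner entries \<open>a\<^sub>1\<^sub>4, a\<^sub>2\<^sub>5, a\<^sub>1\<^sub>5\<close> nonzero, which lies in \<open>K\<close> only if its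
  exponent is divisible by \<open>N\<close>. For three families the test cannot separate the element from a
  partner whose exponent is already controlled by another test; it then gives a congruence
  between the two exponents.\<close>

lemma inv_letter_inv_letter [simp]: "inv_letter (inv_letter a) = a"
  by (simp add: inv_letter_def)

lemma fst_inv_letter [simp]: "fst (inv_letter a) = (\<not> fst a)"
  and snd_inv_letter [simp]: "snd (inv_letter a) = snd a"
  by (simp_all add: inv_letter_def)

lemma reduced_ConsD: "reduced (a # ys) \<Longrightarrow> reduced ys"
  by (cases ys) auto

lemma reduced_cons_red: "reduced ys \<Longrightarrow> reduced (cons_red a ys)"
  by (cases ys) (auto dest: reduced_ConsD)

lemma reduced_foldr_cons_red: "reduced zs \<Longrightarrow> reduced (foldr cons_red xs zs)"
  by (induction xs) (auto simp: reduced_cons_red)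

lemma reduce_Nil [simp]: "reduce [] = []"
  by (simp add: reduce_def)

lemma reduce_Cons: "reduce (a # xs) = cons_red a (reduce xs)"
  by (simp add: reduce_def)

lemma reduced_reduce: "reduced (reduce xs)"
  by (simp add: reduce_def reduced_foldr_cons_red)

lemma reduce_reduced: "reduced xs \<Longrightarrow> reduce xs = xs"
proof (induction xs)
  case (Cons a xs)
  then have "reduce xs = xs"
    using reduced_ConsD by blast
  with Cons.prems show ?case
    by (cases xs) (auto simp: reduce_Cons)
qed simp

lemma cons_red_cancel: "reduced w \<Longrightarrow> cons_red a (cons_red (inv_letter a) w) = w"
  by (cases w rule: reduced.cases) auto

lemma foldr_cons_red_cons_red:
  assumes "reduced r" and "reduced zs"
  shows "foldr cons_red (cons_red a r) zs = cons_red a (foldr cons_red r zs)"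
proof (cases r)
  case (Cons b r')
  have "reduced (foldr cons_red r' zs)"
    using assms(2) by (rule reduced_foldr_cons_red)
  with Cons show ?thesis
    by (auto simp: cons_red_cancel)
qed simp

lemma foldr_cons_red_reduce: "reduced zs \<Longrightarrow> foldr cons_red (reduce xs) zs = foldr cons_red xs zs"
  by (induction xs) (simp_all add: reduce_Cons foldr_cons_red_cons_red reduced_reduce)

lemma reduce_append: "reduce (xs @ ys) = foldr cons_red xs (reduce ys)"
  by (simp add: reduce_def)

lemma reduce_reduce_append: "reduce (reduce xs @ ys) = reduce (xs @ ys)"
  by (simp add: reduce_append foldr_cons_red_reduce reduced_reduce)

lemma reduce_append_reduce: "reduce (xs @ reduce ys) = reduce (xs @ ys)"
  by (simp add: reduce_append reduce_reduced reduced_reduce)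

lemma reduce_append_inverse: "reduce (xs @ rev (map inv_letter xs) @ ys) = reduce ys"
proof (induction xs arbitrary: ys)
  case (Cons a xs)
  then have "reduce ((a # xs) @ rev (map inv_letter (a # xs)) @ ys) = cons_red a (reduce (inv_letter a # ys))"
    by (simp add: reduce_Cons)
  then show ?case
    by (simp add: reduce_Cons cons_red_cancel reduced_reduce)
qed simp

lemma set_reduce_subset: "set (reduce xs) \<subseteq> set xs"
proof (induction xs)
  case (Cons a xs)
  have "set (cons_red a ys) \<subseteq> insert a (set ys)" for ys
    by (cases ys) auto
  with Cons show ?case
    by (fastforce simp: reduce_Cons)
qed simp

lemma free_grp_carrier: "carrier (free_grp S) = {w. reduced w \<and> snd ` set w \<subseteq> S}"
  and free_grp_mult: "x \<otimes>\<^bsub>free_grp S\<^esub> y = reduce (x @ y)"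
  and free_grp_one: "\<one>\<^bsub>free_grp S\<^esub> = []"
  by (simp_all add: free_grp_def)

lemma group_free_grp: "group (free_grp S)"
proof (rule groupI)
  fix x y
  assume "x \<in> carrier (free_grp S)" "y \<in> carrier (free_grp S)"
  then show "x \<otimes>\<^bsub>free_grp S\<^esub> y \<in> carrier (free_grp S)"
    using set_reduce_subset[of "x @ y"]
    by (force simp: free_grp_carrier free_grp_mult reduced_reduce)
next
  fix x
  assume x: "x \<in> carrier (free_grp S)"
  let ?y = "reduce (rev (map inv_letter x))"
  have "?y \<otimes>\<^bsub>free_grp S\<^esub> x = \<one>\<^bsub>free_grp S\<^esub>"
    using reduce_append_inverse[of "rev (map inv_letter x)" "[]"]
    by (simp add: free_grp_mult free_grp_one reduce_reduce_append rev_map comp_def)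
  moreover have "?y \<in> carrier (free_grp S)"
    using x set_reduce_subset[of "rev (map inv_letter x)"]
    by (force simp: free_grp_carrier reduced_reduce)
  ultimately show "\<exists>y\<in>carrier (free_grp S). y \<otimes>\<^bsub>free_grp S\<^esub> x = \<one>\<^bsub>free_grp S\<^esub>"
    by blast
qed (simp_all add: free_grp_carrier free_grp_mult free_grp_one reduce_reduced
                   reduce_reduce_append reduce_append_reduce)

definition eval_letter :: "('g, 'b) monoid_scheme \<Rightarrow> ('a \<Rightarrow> 'g) \<Rightarrow> 'a letter \<Rightarrow> 'g" where
  "eval_letter G g l = (if fst l then inv\<^bsub>G\<^esub> (g (snd l)) else g (snd l))"

definition eval_word :: "('g, 'b) monoid_scheme \<Rightarrow> ('a \<Rightarrow> 'g) \<Rightarrow> 'a letter list \<Rightarrow> 'g" where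
  "eval_word G g w = foldr (\<lambda>l x. eval_letter G g l \<otimes>\<^bsub>G\<^esub> x) w \<one>\<^bsub>G\<^esub>"

context group
begin

lemma eval_letter_closed: "range g \<subseteq> carrier G \<Longrightarrow> eval_letter G g l \<in> carrier G"
  by (auto simp: eval_letter_def)

lemma eval_letter_inv_letter:
  "range g \<subseteq> carrier G \<Longrightarrow> eval_letter G g (inv_letter l) = inv (eval_letter G g l)"
  by (auto simp: eval_letter_def inv_letter_def intro!: inv_inv[symmetric])

lemma eval_word_Nil [simp]: "eval_word G g [] = \<one>"
  and eval_word_Cons: "eval_word G g (l # w) = eval_letter G g l \<otimes> eval_word G g w"
  by (simp_all add: eval_word_def)

lemma eval_word_closed: "range g \<subseteq> carrier G \<Longrightarrow> eval_word G g w \<in> carrier G"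
  by (induction w) (simp_all add: eval_word_Cons eval_letter_closed)

lemma eval_word_append:
  "range g \<subseteq> carrier G \<Longrightarrow> eval_word G g (xs @ ys) = eval_word G g xs \<otimes> eval_word G g ys"
  by (induction xs) (simp_all add: eval_word_Cons m_assoc eval_word_closed eval_letter_closed)

lemma eval_word_cons_red:
  "range g \<subseteq> carrier G \<Longrightarrow> eval_word G g (cons_red a ys) = eval_word G g (a # ys)"
  by (cases ys) (auto simp: eval_word_Cons eval_letter_inv_letter eval_letter_closed
                            eval_word_closed m_assoc[symmetric])

lemma eval_word_reduce: "range g \<subseteq> carrier G \<Longrightarrow> eval_word G g (reduce xs) = eval_word G g xs"
  by (induction xs) (simp_all add: reduce_Cons eval_word_cons_red eval_word_Cons)

lemma eval_word_gen_word: "range g \<subseteq> carrier G \<Longrightarrow> eval_word G g (gen_word a) = g a"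
  by (simp add: gen_word_def eval_word_def eval_letter_def image_subset_iff)

lemma group_hom_eval_word: "range g \<subseteq> carrier G \<Longrightarrow> group_hom (free_grp S) G (eval_word G g)"
  by (auto intro!: homI simp: group_hom_def group_hom_axioms_def group_free_grp is_group
           free_grp_mult eval_word_reduce eval_word_append eval_word_closed)

end

definition normalizes :: "('g, 'b) monoid_scheme \<Rightarrow> 'g set \<Rightarrow> 'g set \<Rightarrow> bool" where
  "normalizes G C K \<longleftrightarrow>
     (\<forall>x\<in>C. \<forall>k\<in>K. x \<otimes>\<^bsub>G\<^esub> k \<otimes>\<^bsub>G\<^esub> inv\<^bsub>G\<^esub> x \<in> K \<and> inv\<^bsub>G\<^esub> x \<otimes>\<^bsub>G\<^esub> k \<otimes>\<^bsub>G\<^esub> x \<in> K)"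

lemma normalizes_subset: "normalizes G D K \<Longrightarrow> C \<subseteq> D \<Longrightarrow> normalizes G C K"
  by (auto simp: normalizes_def)

context group
begin

lemma mult_inv_cancel_left [simp]: "x \<in> carrier G \<Longrightarrow> y \<in> carrier G \<Longrightarrow> x \<otimes> (inv x \<otimes> y) = y"
  and inv_mult_cancel_left [simp]: "x \<in> carrier G \<Longrightarrow> y \<in> carrier G \<Longrightarrow> inv x \<otimes> (x \<otimes> y) = y"
  by (simp_all add: m_assoc[symmetric])

lemma comm_closed [simp]: "a \<in> carrier G \<Longrightarrow> b \<in> carrier G \<Longrightarrow> comm G a b \<in> carrier G"
  by (simp add: comm_def)

lemma comm_one_left [simp]: "a \<in> carrier G \<Longrightarrow> comm G \<one> a = \<one>"
  by (simp add: comm_def)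

lemma comm_mult_left: "\<lbrakk>a \<in> carrier G; b \<in> carrier G; c \<in> carrier G\<rbrakk> \<Longrightarrow>
    comm G (a \<otimes> b) c = inv b \<otimes> comm G a c \<otimes> b \<otimes> comm G b c"
  by (simp add: comm_def m_assoc inv_mult_group)

lemma comm_mult_right: "\<lbrakk>a \<in> carrier G; b \<in> carrier G; c \<in> carrier G\<rbrakk> \<Longrightarrow>
    comm G a (b \<otimes> c) = comm G a c \<otimes> (inv c \<otimes> comm G a b \<otimes> c)"
  by (simp add: comm_def m_assoc inv_mult_group)

lemma comm_inv_left: "\<lbrakk>a \<in> carrier G; c \<in> carrier G\<rbrakk> \<Longrightarrow>
    comm G (inv a) c = a \<otimes> inv (comm G a c) \<otimes> inv a"
  by (simp add: comm_def m_assoc inv_mult_group)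

lemma comm_inv_right: "\<lbrakk>a \<in> carrier G; b \<in> carrier G\<rbrakk> \<Longrightarrow>
    comm G a (inv b) = b \<otimes> inv (comm G a b) \<otimes> inv b"
  by (simp add: comm_def m_assoc inv_mult_group)

lemma comm_conj_left: "\<lbrakk>a \<in> carrier G; x \<in> carrier G; c \<in> carrier G\<rbrakk> \<Longrightarrow>
    comm G (x \<otimes> a \<otimes> inv x) c = x \<otimes> comm G a (inv x \<otimes> c \<otimes> x) \<otimes> inv x"
  by (simp add: comm_def m_assoc inv_mult_group)

lemma normalizes_range_eval_word:
  assumes K: "subgroup K G" and g: "range g \<subseteq> carrier G" and "normalizes G (range g) K"
  shows "normalizes G (range (eval_word G g)) K"
proof -
  have "eval_word G g w \<otimes> k \<otimes> inv (eval_word G g w) \<in> K \<and>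
        inv (eval_word G g w) \<otimes> k \<otimes> eval_word G g w \<in> K" if "k \<in> K" for w k
    using that
  proof (induction w arbitrary: k)
    case Nil
    then show ?case
      using subgroup.mem_carrier[OF K] by simp
  next
    case (Cons l w)
    let ?x = "eval_letter G g l" and ?y = "eval_word G g w"
    have x: "?x \<in> carrier G" and y: "?y \<in> carrier G" and k: "k \<in> carrier G"
      using g Cons.prems subgroup.mem_carrier[OF K] by (auto simp: eval_letter_closed eval_word_closed)
    have "?x \<otimes> k \<otimes> inv ?x \<in> K \<and> inv ?x \<otimes> k \<otimes> ?x \<in> K" if "k \<in> K" for k
      using that \<open>normalizes G (range g) K\<close> g by (auto simp: eval_letter_def normalizes_def image_subset_iff)
    moreover have "eval_word G g (l # w) \<otimes> k \<otimes> inv (eval_word G g (l # w)) = ?x \<otimes> (?y \<otimes> k \<otimes> inv ?y) \<otimes> inv ?x"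
      and "inv (eval_word G g (l # w)) \<otimes> k \<otimes> eval_word G g (l # w) = inv ?y \<otimes> (inv ?x \<otimes> k \<otimes> ?x) \<otimes> ?y"
      using x y k by (simp_all add: eval_word_Cons inv_mult_group m_assoc)
    ultimately show ?case
      using Cons by simp
  qed
  then show ?thesis
    by (auto simp: normalizes_def)
qed

lemma comm_eval_word_mem:
  assumes K: "subgroup K G" and g: "range g \<subseteq> carrier G"
    and norm: "normalizes G (range (eval_word G g)) K"
    and u: "u \<in> carrier G" and gens: "\<And>p. comm G u (g p) \<in> K"
  shows "comm G u (eval_word G g w) \<in> K"
proof (induction w)
  case Nil
  then show ?case
    using u by (simp add: comm_def subgroup.one_closed[OF K])
next
  case (Cons l w)
  have "comm G u (eval_letter G g l) \<in> K"
  proof (cases "fst l")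
    case True
    have "g (snd l) = eval_word G g (gen_word (snd l))"
      using g by (simp add: eval_word_gen_word)
    then have "g (snd l) \<otimes> inv (comm G u (g (snd l))) \<otimes> inv (g (snd l)) \<in> K"
      using norm gens subgroup.m_inv_closed[OF K] by (simp add: normalizes_def) metis
    with True u g show ?thesis
      by (simp add: eval_letter_def comm_inv_right subset_iff)
  qed (simp add: eval_letter_def gens)
  then have "inv (eval_word G g w) \<otimes> comm G u (eval_letter G g l) \<otimes> eval_word G g w \<in> K"
    using norm by (simp add: normalizes_def)
  with Cons show ?case
    using g u by (simp add: eval_word_Cons comm_mult_right eval_letter_closed eval_word_closed
                            subgroup.m_closed[OF K])
qed

end

lemma (in group_hom) comm_subgroup_normal_closure_image:
  assumes K: "subgroup K H" and norm: "normalizes H (h ` carrier G) K"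
    and A: "A \<subseteq> carrier G" and rels: "\<And>a y. a \<in> A \<Longrightarrow> y \<in> carrier G \<Longrightarrow> comm H (h a) (h y) \<in> K"
  shows "h ` comm_subgroup G (normal_closure G A) (carrier G) \<subseteq> K"
proof -
  define Z where "Z = {x \<in> carrier G. \<forall>y\<in>carrier G. comm H (h x) (h y) \<in> K}"
  have "subgroup Z G"
  proof (rule G.subgroupI)
    fix a b
    assume "a \<in> Z" "b \<in> Z"
    then show "a \<otimes>\<^bsub>G\<^esub> b \<in> Z"
      using norm by (auto simp: Z_def H.comm_mult_left normalizes_def subgroup.m_closed[OF K])
  next
    fix a
    assume "a \<in> Z"
    then show "inv\<^bsub>G\<^esub> a \<in> Z"
      using norm by (auto simp: Z_def H.comm_inv_left normalizes_def subgroup.m_inv_closed[OF K])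
  qed (auto simp: Z_def subgroup.one_closed[OF K])
  moreover have "{x \<otimes>\<^bsub>G\<^esub> a \<otimes>\<^bsub>G\<^esub> inv\<^bsub>G\<^esub> x | x a. x \<in> carrier G \<and> a \<in> A} \<subseteq> Z"
  proof clarify
    fix x a
    assume "x \<in> carrier G" "a \<in> A"
    have "comm H (h x \<otimes>\<^bsub>H\<^esub> h a \<otimes>\<^bsub>H\<^esub> inv\<^bsub>H\<^esub> h x) (h y) \<in> K" if "y \<in> carrier G" for y
    proof -
      have "comm H (h a) (h (inv\<^bsub>G\<^esub> x \<otimes>\<^bsub>G\<^esub> y \<otimes>\<^bsub>G\<^esub> x)) \<in> K"
        using \<open>a \<in> A\<close> \<open>x \<in> carrier G\<close> \<open>y \<in> carrier G\<close> by (intro rels) auto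
      then show ?thesis
        using norm that \<open>x \<in> carrier G\<close> \<open>a \<in> A\<close> A
        by (auto simp: H.comm_conj_left normalizes_def)
    qed
    then show "x \<otimes>\<^bsub>G\<^esub> a \<otimes>\<^bsub>G\<^esub> inv\<^bsub>G\<^esub> x \<in> Z"
      using \<open>x \<in> carrier G\<close> \<open>a \<in> A\<close> A by (auto simp: Z_def)
  qed
  ultimately have N: "normal_closure G A \<subseteq> Z"
    unfolding normal_closure_def by (rule G.generate_subgroup_incl[rotated])
  have "subgroup {x \<in> carrier G. h x \<in> K} G"
    by (rule G.subgroupI) (auto simp: subgroup.one_closed[OF K] subgroup.m_closed[OF K]
                                      subgroup.m_inv_closed[OF K])
  moreover have "{comm G a b | a b. a \<in> normal_closure G A \<and> b \<in> carrier G} \<subseteq> {x \<in> carrier G. h x \<in> K}"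
    using N by (auto simp: Z_def comm_def)
  ultimately have "comm_subgroup G (normal_closure G A) (carrier G) \<subseteq> {x \<in> carrier G. h x \<in> K}"
    unfolding comm_subgroup_def by (rule G.generate_subgroup_incl[rotated])
  then show ?thesis
    by blast
qed

lemma (in group) eval_word_comm_subgroup_normal_closure:
  assumes K: "subgroup K G" and g: "range g \<subseteq> carrier G" and "normalizes G (range g) K"
    and A: "A \<subseteq> carrier (free_grp S)" and rels: "\<And>a p. a \<in> A \<Longrightarrow> comm G (eval_word G g a) (g p) \<in> K"
  shows "eval_word G g ` comm_subgroup (free_grp S) (normal_closure (free_grp S) A) (carrier (free_grp S)) \<subseteq> K"
proof (rule group_hom.comm_subgroup_normal_closure_image[OF group_hom_eval_word[OF g] K _ A])
  have norm: "normalizes G (range (eval_word G g)) K"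
    using normalizes_range_eval_word[OF K g] \<open>normalizes G (range g) K\<close> .
  then show "normalizes G (eval_word G g ` carrier (free_grp S)) K"
    by (rule normalizes_subset) blast
  show "comm G (eval_word G g a) (eval_word G g y) \<in> K" if "a \<in> A" for a y
    using comm_eval_word_mem[OF K g norm _ rels[OF that]] A that g
    by (auto simp: eval_word_closed)
qed

lemma (in group) list_prod_closed:
  "subgroup H G \<Longrightarrow> set xs \<subseteq> H \<Longrightarrow> list_prod G xs \<in> H"
  by (induction xs) (auto simp: list_prod_def subgroup.one_closed subgroup.m_closed)

lemma (in group) list_prod_filter_mem:
  assumes K: "subgroup K G" and H: "subgroup H G" and norm: "normalizes G H K"
    and fH: "f ` set ps \<subseteq> H" and drop: "\<And>k. k \<in> set ps \<Longrightarrow> \<not> P k \<Longrightarrow> f k \<in> K"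
    and prod: "list_prod G (map f ps) \<in> K"
  shows "list_prod G (map f (filter P ps)) \<in> K"
proof -
  have HG: "x \<in> H \<Longrightarrow> x \<in> carrier G" for x
    using subgroup.mem_carrier[OF H] .
  have "a \<otimes> list_prod G (map f (filter P ps)) \<in> K"
    if "a \<in> H" "a \<otimes> list_prod G (map f ps) \<in> K" for a
    using that fH drop
  proof (induction ps arbitrary: a)
    case Nil
    then show ?case by simp
  next
    case (Cons k ps)
    let ?p = "list_prod G (map f ps)"
    have fk: "f k \<in> H" and p: "?p \<in> H"
      using Cons.prems H by (auto intro!: list_prod_closed)
    show ?case
    proof (cases "P k")
      case True
      have "a \<otimes> f k \<in> H" and "a \<otimes> f k \<otimes> ?p \<in> K"
        using Cons.prems fk p HG by (simp_all add: list_prod_def m_assoc subgroup.m_closed[OF H])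
      then have "a \<otimes> f k \<otimes> list_prod G (map f (filter P ps)) \<in> K"
        using Cons by simp
      moreover have "list_prod G (map f (filter P ps)) \<in> H"
        using Cons.prems by (force intro!: list_prod_closed[OF H])
      ultimately show ?thesis
        using True Cons.prems fk HG by (simp add: list_prod_def m_assoc)
    next
      case False
      have "a \<otimes> (f k \<otimes> ?p) \<in> K" and "inv ?p \<otimes> inv (f k) \<otimes> ?p \<in> K"
        using Cons.prems False norm p subgroup.m_inv_closed[OF K]
        by (auto simp: list_prod_def normalizes_def)
      then have "a \<otimes> (f k \<otimes> ?p) \<otimes> (inv ?p \<otimes> inv (f k) \<otimes> ?p) \<in> K"
        by (rule subgroup.m_closed[OF K])
      also have "a \<otimes> (f k \<otimes> ?p) \<otimes> (inv ?p \<otimes> inv (f k) \<otimes> ?p) = a \<otimes> ?p"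
        using Cons.prems fk p HG by (simp add: m_assoc)
      finally show ?thesis
        using Cons False by simp
    qed
  qed
  moreover have "list_prod G (map f qs) \<in> carrier G" if "set qs \<subseteq> set ps" for qs
    using fH that HG list_prod_closed[OF H, of "map f qs"] by auto
  ultimately show ?thesis
    using prod H by (metis l_one one_closed subgroup.one_closed filter_is_subset order_refl)
qed

datatype tag = T1 nat | T2 nat nat | T3 nat nat | T4 nat nat | T5 nat nat
  | T6 nat | T7 nat | T8 nat | T9 nat | T10 nat | T11 nat | T12 nat | T13 nat

definition tags :: "nat \<Rightarrow> tag list" where
  "tags n = [T1 i. i \<leftarrow> [1..<n]]
   @ concat [concat [[T2 i j, T3 i j, T4 i j, T5 i j]. j \<leftarrow> [i+2..<n]]. i \<leftarrow> [1..<n]]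
   @ concat [[T6 i, T7 i, T8 i, T9 i, T10 i, T11 i]. i \<leftarrow> [1..<n-1]]
   @ concat [[T12 i, T13 i]. i \<leftarrow> [1..<n-2]]"

fun tag_in_range :: "nat \<Rightarrow> tag \<Rightarrow> bool" where
  "tag_in_range n (T1 i) \<longleftrightarrow> 1 \<le> i \<and> i < n"
| "tag_in_range n (T2 i j) \<longleftrightarrow> 1 \<le> i \<and> i + 2 \<le> j \<and> j < n"
| "tag_in_range n (T3 i j) \<longleftrightarrow> 1 \<le> i \<and> i + 2 \<le> j \<and> j < n"
| "tag_in_range n (T4 i j) \<longleftrightarrow> 1 \<le> i \<and> i + 2 \<le> j \<and> j < n"
| "tag_in_range n (T5 i j) \<longleftrightarrow> 1 \<le> i \<and> i + 2 \<le> j \<and> j < n"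
| "tag_in_range n (T6 i) \<longleftrightarrow> 1 \<le> i \<and> i + 2 \<le> n"
| "tag_in_range n (T7 i) \<longleftrightarrow> 1 \<le> i \<and> i + 2 \<le> n"
| "tag_in_range n (T8 i) \<longleftrightarrow> 1 \<le> i \<and> i + 2 \<le> n"
| "tag_in_range n (T9 i) \<longleftrightarrow> 1 \<le> i \<and> i + 2 \<le> n"
| "tag_in_range n (T10 i) \<longleftrightarrow> 1 \<le> i \<and> i + 2 \<le> n"
| "tag_in_range n (T11 i) \<longleftrightarrow> 1 \<le> i \<and> i + 2 \<le> n"
| "tag_in_range n (T12 i) \<longleftrightarrow> 1 \<le> i \<and> i + 3 \<le> n"
| "tag_in_range n (T13 i) \<longleftrightarrow> 1 \<le> i \<and> i + 3 \<le> n"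

lemma set_tags: "set (tags n) = {t. tag_in_range n t}"
proof -
  have "t \<in> set (tags n) \<longleftrightarrow> tag_in_range n t" for t
    by (cases t) (auto simp: tags_def)
  then show ?thesis
    by blast
qed

lemma distinct_tags: "distinct (tags n)"
proof -
  have distinct_concat_map: "distinct (concat (map f xs))"
    if "distinct xs" "\<forall>x\<in>set xs. distinct (f x)"
       "\<forall>x\<in>set xs. \<forall>y\<in>set xs. x \<noteq> y \<longrightarrow> set (f x) \<inter> set (f y) = {}" for f :: "nat \<Rightarrow> tag list" and xs
    using that by (induction xs) auto
  show ?thesis
    unfolding tags_def by (auto simp: distinct_map inj_on_def intro!: distinct_concat_map)
qed

fun tag_elem :: "('g, 'b) monoid_scheme \<Rightarrow> (nat \<times> bool \<Rightarrow> 'g) \<Rightarrow> tag \<Rightarrow> 'g" where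
  "tag_elem G s (T1 i) = comm G (s (i, False)) (s (i, True))"
| "tag_elem G s (T2 i j) = comm G (s (i, False)) (s (j, False))"
| "tag_elem G s (T3 i j) =
     comm G (s (i, True)) (s (j, True)) \<otimes>\<^bsub>G\<^esub> inv\<^bsub>G\<^esub> (comm G (s (i, False)) (s (j, False)))"
| "tag_elem G s (T4 i j) =
     comm G (s (i, True)) (s (j, False)) \<otimes>\<^bsub>G\<^esub> inv\<^bsub>G\<^esub> (comm G (s (i, True)) (s (j, True)))"
| "tag_elem G s (T5 i j) =
     comm G (s (i, False)) (s (j, True)) \<otimes>\<^bsub>G\<^esub> inv\<^bsub>G\<^esub> (comm G (s (i, True)) (s (j, True)))"
| "tag_elem G s (T6 i) =
     comm G (s (i, False)) (s (i+1, True)) \<otimes>\<^bsub>G\<^esub> inv\<^bsub>G\<^esub> (comm G (s (i, True)) (s (i+1, False)))"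
| "tag_elem G s (T7 i) =
     comm G (s (i, True)) (s (i+1, True)) \<otimes>\<^bsub>G\<^esub> inv\<^bsub>G\<^esub> (comm G (s (i, True)) (s (i+1, False)))"
| "tag_elem G s (T8 i) = comm3 G (s (i, False)) (s (i+1, False)) (s (i, False))"
| "tag_elem G s (T9 i) =
     comm3 G (s (i, False)) (s (i+1, False)) (s (i+1, False) \<otimes>\<^bsub>G\<^esub> inv\<^bsub>G\<^esub> (s (i, False)))"
| "tag_elem G s (T10 i) =
     comm3 G (s (i, False)) (s (i+1, False)) (s (i, True) \<otimes>\<^bsub>G\<^esub> inv\<^bsub>G\<^esub> (s (i, False)))"
| "tag_elem G s (T11 i) =
     comm3 G (s (i, False)) (s (i+1, False))
       ((s (i, True) \<otimes>\<^bsub>G\<^esub> inv\<^bsub>G\<^esub> (s (i+1, True)))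
          \<otimes>\<^bsub>G\<^esub> inv\<^bsub>G\<^esub> (s (i, False) \<otimes>\<^bsub>G\<^esub> inv\<^bsub>G\<^esub> (s (i+1, False))))"
| "tag_elem G s (T12 i) = comm4 G (s (i, False)) (s (i+1, False)) (s (i+2, False)) (s (i+1, False))"
| "tag_elem G s (T13 i) =
     comm4 G (s (i, False)) (s (i+1, False)) (s (i+2, False))
       (s (i+1, True) \<otimes>\<^bsub>G\<^esub> inv\<^bsub>G\<^esub> (s (i+1, False)))"

fun tag_modulus :: "nat \<Rightarrow> nat \<Rightarrow> tag \<Rightarrow> nat" where
  "tag_modulus m1 m2 (T1 i) = m1"
| "tag_modulus m1 m2 (T2 i j) = m2"
| "tag_modulus m1 m2 (T3 i j) = m1"
| "tag_modulus m1 m2 (T4 i j) = m1"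
| "tag_modulus m1 m2 (T5 i j) = m1"
| "tag_modulus m1 m2 (T6 i) = m1"
| "tag_modulus m1 m2 (T7 i) = m1"
| "tag_modulus m1 m2 (T8 i) = m2"
| "tag_modulus m1 m2 (T9 i) = gcd m2 (m2 choose 2)"
| "tag_modulus m1 m2 (T10 i) = m1"
| "tag_modulus m1 m2 (T11 i) = gcd m1 (m1 choose 2)"
| "tag_modulus m1 m2 (T12 i) = gcd 2 m2"
| "tag_modulus m1 m2 (T13 i) = gcd 2 m1"

lemma elem_list_eq_tags:
  "elem_list n m1 m2 = map (\<lambda>t. (tag_elem (FF n) gen_word t, tag_modulus m1 m2 t)) (tags n)"
  by (simp add: elem_list_def tags_def map_concat Let_def comp_def s1_def sx_def)

definition relators :: "('g, 'b) monoid_scheme \<Rightarrow> (nat \<times> bool \<Rightarrow> 'g) \<Rightarrow> nat \<Rightarrow> nat \<Rightarrow> nat \<Rightarrow> 'g set" where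
  "relators G s n m1 m2 =
      {s (i, False) [^]\<^bsub>G\<^esub> m1 \<otimes>\<^bsub>G\<^esub> inv\<^bsub>G\<^esub> (s (i, True) [^]\<^bsub>G\<^esub> m1) | i. 1 \<le> i \<and> i \<le> n - 1}
    \<union> {s (i, True) [^]\<^bsub>G\<^esub> m2 | i. 1 \<le> i \<and> i \<le> n - 1}
    \<union> {comm G (s (i, False)) (s (i, True)) | i. 1 \<le> i \<and> i \<le> n - 1}
    \<union> {comm G (s (i, a)) (s (j, b)) | i j a b. 1 \<le> i \<and> i + 1 < j \<and> j \<le> n - 1}
    \<union> {comm G (inv\<^bsub>G\<^esub> (s (i, a))) (inv\<^bsub>G\<^esub> (s (i+1, True)))
          \<otimes>\<^bsub>G\<^esub> inv\<^bsub>G\<^esub> (comm G (s (i, True)) (s (i+1, False))) | i a. 1 \<le> i \<and> i \<le> n - 2}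
    \<union> {comm3 G (s (i, a)) (s (i+1, False)) (s (i, False)) | i a. 1 \<le> i \<and> i \<le> n - 2}
    \<union> {comm3 G (s (i, a)) (s (i+1, False)) (s (i+1, False)) | i a. 1 \<le> i \<and> i \<le> n - 2}
    \<union> {comm G (comm G (s (i, a)) (s (i+1, False))) (comm G (s (i+1, b)) (s (i+2, False)))
         | i a b. 1 \<le> i \<and> i \<le> n - 3}"

lemma UT_rels_eq_relators: "UT_rels n m1 m2 = relators (FF n) gen_word n m1 m2"
  by (simp add: UT_rels_def relators_def Let_def s1_def sx_def sb_def)

lemma gen_word_in_FF: "1 \<le> i \<Longrightarrow> i < n \<Longrightarrow> gen_word (i, b) \<in> carrier (FF n)"
  by (auto simp: FF_def free_grp_carrier gen_word_def UT_gens_def)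

lemma group_FF: "group (FF n)"
  unfolding FF_def by (rule group_free_grp)

lemma (in group) comm3_closed [simp]:
  "a \<in> carrier G \<Longrightarrow> b \<in> carrier G \<Longrightarrow> c \<in> carrier G \<Longrightarrow> comm3 G a b c \<in> carrier G"
  by (simp add: comm3_def)

lemma (in group_hom) hom_comm:
  "a \<in> carrier G \<Longrightarrow> b \<in> carrier G \<Longrightarrow> h (comm G a b) = comm H (h a) (h b)"
  by (simp add: comm_def)

lemma (in group_hom) hom_comm3:
  "a \<in> carrier G \<Longrightarrow> b \<in> carrier G \<Longrightarrow> c \<in> carrier G \<Longrightarrow> h (comm3 G a b c) = comm3 H (h a) (h b) (h c)"
  by (simp add: comm3_def hom_comm)

lemma (in group_hom) hom_comm4:
  "\<lbrakk>a \<in> carrier G; b \<in> carrier G; c \<in> carrier G; d \<in> carrier G\<rbrakk> \<Longrightarrow>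
    h (comm4 G a b c d) = comm4 H (h a) (h b) (h c) (h d)"
  by (simp add: comm4_def hom_comm hom_comm3)

lemmas (in group_hom) hom_simps = hom_comm hom_comm3 hom_comm4 hom_nat_pow

lemma (in group_hom) hom_tag_elem:
  assumes "tag_in_range n t" and s: "\<And>i b. 1 \<le> i \<Longrightarrow> i < n \<Longrightarrow> s (i, b) \<in> carrier G"
  shows "h (tag_elem G s t) = tag_elem H (h \<circ> s) t"
  using assms by (cases t) (simp_all add: hom_simps s)

lemma (in group_hom) hom_relators:
  assumes s: "\<And>i b. 1 \<le> i \<Longrightarrow> i < n \<Longrightarrow> s (i, b) \<in> carrier G"
    and r: "r \<in> relators G s n m1 m2"
  shows "h r \<in> relators H (h \<circ> s) n m1 m2"
  using r unfolding relators_def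
  apply (elim UnE CollectE exE conjE)
  by (simp add: hom_simps s; blast)+

lemma (in group) tag_elem_closed:
  assumes "tag_in_range n t" and s: "\<And>i b. 1 \<le> i \<Longrightarrow> i < n \<Longrightarrow> s (i, b) \<in> carrier G"
  shows "tag_elem G s t \<in> carrier G"
  using assms by (cases t) (simp_all add: s comm4_def)

lemma (in group) relators_closed:
  assumes s: "\<And>i b. 1 \<le> i \<Longrightarrow> i < n \<Longrightarrow> s (i, b) \<in> carrier G"
  shows "relators G s n m1 m2 \<subseteq> carrier G"
proof
  fix r
  assume "r \<in> relators G s n m1 m2"
  then show "r \<in> carrier G"
    unfolding relators_def
    by (elim UnE CollectE exE conjE) (simp_all add: s)
qed

lemma (in group_hom) hom_list_prod:
  "set xs \<subseteq> carrier G \<Longrightarrow> h (list_prod G xs) = list_prod H (map h xs)"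
  by (induction xs) (simp_all add: list_prod_def G.list_prod_closed[OF G.subgroup_self, unfolded list_prod_def])

lemma tag_elem_FF_closed: "tag_in_range n t \<Longrightarrow> tag_elem (FF n) gen_word t \<in> carrier (FF n)"
  by (rule group.tag_elem_closed[OF group_FF]) (auto intro: gen_word_in_FF)

lemma relators_FF_closed: "relators (FF n) gen_word n m1 m2 \<subseteq> carrier (FF n)"
  by (rule group.relators_closed[OF group_FF]) (rule gen_word_in_FF)

lemma filter_eq_singleton: "distinct xs \<Longrightarrow> a \<in> set xs \<Longrightarrow> filter (\<lambda>y. y = a) xs = [a]"
  by (induction xs) (auto simp: filter_empty_conv)

lemma filter_eq_pair:
  assumes "distinct xs" "a \<in> set xs" "b \<in> set xs" "a \<noteq> b"
  shows "filter (\<lambda>y. y = a \<or> y = b) xs \<in> {[a, b], [b, a]}"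
  using assms
proof (induction xs)
  case (Cons x xs)
  have "filter (\<lambda>y. y = a \<or> y = b) xs = filter (\<lambda>y. y = c) xs" if "x \<notin> set xs" "{a, b} = {x, c}" for c
    using that by (auto intro!: filter_cong)
  from this[of b] this[of a] show ?case
    using Cons by (auto simp: filter_eq_singleton insert_commute)
qed simp

section \<open>Detecting exponents by homomorphisms\<close>

definition admissible ::
    "('g, 'b) monoid_scheme \<Rightarrow> (nat \<times> bool \<Rightarrow> 'g) \<Rightarrow> 'g set \<Rightarrow> nat \<Rightarrow> nat \<Rightarrow> nat \<Rightarrow> bool" where
  "admissible G g K n m1 m2 \<longleftrightarrow> subgroup K G \<and> normalizes G (range g) K \<and>
     (\<forall>r\<in>relators G g n m1 m2. \<forall>q. comm G r (g q) \<in> K)"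

lemma (in group) group_hom_FF_eval_word:
  "range g \<subseteq> carrier G \<Longrightarrow> group_hom (FF n) G (eval_word G g)"
  unfolding FF_def by (rule group_hom_eval_word)

lemma (in group) eval_word_comp_gen_word: "range g \<subseteq> carrier G \<Longrightarrow> eval_word G g \<circ> gen_word = g"
  by (simp add: fun_eq_iff eval_word_gen_word)

lemma (in group) eval_word_comm_subgroup_RR:
  assumes adm: "admissible G g K n m1 m2" and g: "range g \<subseteq> carrier G"
  shows "eval_word G g ` comm_subgroup (FF n) (RR n m1 m2) (carrier (FF n)) \<subseteq> K"
proof -
  interpret h: group_hom "FF n" G "eval_word G g"
    using g by (rule group_hom_FF_eval_word)
  have "eval_word G g r \<in> relators G g n m1 m2" if "r \<in> relators (FF n) gen_word n m1 m2" for r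
    using h.hom_relators[where s = gen_word, OF gen_word_in_FF that] g by (simp add: eval_word_comp_gen_word)
  then show ?thesis
    using adm relators_FF_closed
    unfolding RR_def UT_rels_eq_relators FF_def admissible_def
    by (intro eval_word_comm_subgroup_normal_closure[OF _ g]) auto
qed

locale exponent_relation =
  fixes n m1 m2 :: nat and ps :: "nat list" and e :: "nat \<Rightarrow> int"
  assumes m1_pos: "0 < m1" and m2_pos: "0 < m2" and m1_dvd_m2: "m1 dvd m2"
    and distinct_ps: "distinct ps" and set_ps: "set ps = {..<length (elem_list n m1 m2)}"
    and prod_in_RF: "list_prod (FF n)
             (map (\<lambda>k. fst (elem_list n m1 m2 ! k) [^]\<^bsub>FF n\<^esub> (e k :: int)) ps)
           \<in> comm_subgroup (FF n) (RR n m1 m2) (carrier (FF n))"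
begin

lemma set_ps_tags: "set ps = {..<length (tags n)}"
  by (simp add: set_ps elem_list_eq_tags)

lemma filter_tag_powers_mem:
  assumes G: "group G" and adm: "admissible G g K n m1 m2" and g: "range g \<subseteq> carrier G"
    and drop: "\<And>k. k < length (tags n) \<Longrightarrow> \<not> P k \<Longrightarrow> tag_elem G g (tags n ! k) \<in> K"
  shows "list_prod G (map (\<lambda>k. tag_elem G g (tags n ! k) [^]\<^bsub>G\<^esub> e k) (filter P ps)) \<in> K"
proof -
  interpret G: group G
    by (rule G)
  interpret h: group_hom "FF n" G "eval_word G g"
    using g by (rule G.group_hom_FF_eval_word)
  have K: "subgroup K G"
    using adm by (simp add: admissible_def)
  let ?x = "\<lambda>k. fst (elem_list n m1 m2 ! k) [^]\<^bsub>FF n\<^esub> e k"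
  let ?f = "\<lambda>k. tag_elem G g (tags n ! k) [^]\<^bsub>G\<^esub> e k"
  have x: "?x k \<in> carrier (FF n)" and hx: "eval_word G g (?x k) = ?f k" if "k \<in> set ps" for k
  proof -
    have "tags n ! k \<in> set (tags n)"
      using that set_ps_tags by simp
    then have t: "tag_in_range n (tags n ! k)"
      by (simp add: set_tags)
    have "tag_elem (FF n) gen_word (tags n ! k) \<in> carrier (FF n)"
      using t by (rule tag_elem_FF_closed)
    then show "?x k \<in> carrier (FF n)" and "eval_word G g (?x k) = ?f k"
      using that set_ps_tags h.hom_tag_elem[where s = gen_word, OF t gen_word_in_FF] g
      by (simp_all add: elem_list_eq_tags h.hom_int_pow G.eval_word_comp_gen_word)
  qed
  have "list_prod G (map ?f ps) = list_prod G (map (eval_word G g) (map ?x ps))"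
    unfolding map_map by (rule arg_cong[where f = "list_prod G"], rule map_cong) (simp_all add: hx)
  also have "\<dots> = eval_word G g (list_prod (FF n) (map ?x ps))"
    using x by (intro h.hom_list_prod[symmetric]) auto
  also have "\<dots> \<in> K"
    using G.eval_word_comm_subgroup_RR[OF adm g] prod_in_RF by blast
  finally have prod: "list_prod G (map ?f ps) \<in> K" .
  show ?thesis
  proof (rule G.list_prod_filter_mem[OF K h.img_is_subgroup _ _ _ prod])
    show "normalizes G (eval_word G g ` carrier (FF n)) K"
      using G.normalizes_range_eval_word[OF K g] adm
      by (auto simp: admissible_def intro: normalizes_subset)
    show "?f ` set ps \<subseteq> eval_word G g ` carrier (FF n)"
      using x hx by (metis (no_types, lifting) image_eqI image_subsetI)
    show "?f k \<in> K" if "k \<in> set ps" "\<not> P k" for k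
      using that drop set_ps_tags G.subgroup_int_pow_closed[OF K] by auto
  qed
qed

lemma tag_power_mem:
  assumes "group G" "admissible G g K n m1 m2" "range g \<subseteq> carrier G" and k: "k < length (tags n)"
    and drop: "\<And>t. t \<in> set (tags n) \<Longrightarrow> t \<noteq> tags n ! k \<Longrightarrow> tag_elem G g t \<in> K"
  shows "tag_elem G g (tags n ! k) [^]\<^bsub>G\<^esub> e k \<in> K"
proof -
  have "filter (\<lambda>k'. k' = k) ps = [k]"
    using distinct_ps set_ps_tags k by (simp add: filter_eq_singleton)
  moreover have "list_prod G (map (\<lambda>k. tag_elem G g (tags n ! k) [^]\<^bsub>G\<^esub> e k) (filter (\<lambda>k'. k' = k) ps)) \<in> K"
    using assms distinct_tags[of n] by (intro filter_tag_powers_mem) (auto simp: nth_eq_iff_index_eq)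
  moreover have "tag_elem G g (tags n ! k) \<in> carrier G"
    using nth_mem[OF k] assms(1,3) by (intro group.tag_elem_closed[where n = n]) (auto simp: set_tags)
  ultimately show ?thesis
    using group.int_pow_closed[OF assms(1)] monoid.r_one[OF group.is_monoid[OF assms(1)]]
    by (simp add: list_prod_def)
qed

lemma tag_power_pair_mem:
  assumes G: "group G" and adm: "admissible G g K n m1 m2" and g: "range g \<subseteq> carrier G"
    and k: "k < length (tags n)" and k': "k' < length (tags n)" and "k \<noteq> k'"
    and drop: "\<And>t. t \<in> set (tags n) \<Longrightarrow> t \<noteq> tags n ! k \<Longrightarrow> t \<noteq> tags n ! k' \<Longrightarrow> tag_elem G g t \<in> K"
  defines "x \<equiv> \<lambda>j. tag_elem G g (tags n ! j) [^]\<^bsub>G\<^esub> e j"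
  shows "x k \<otimes>\<^bsub>G\<^esub> x k' \<in> K \<or> x k' \<otimes>\<^bsub>G\<^esub> x k \<in> K"
proof -
  interpret G: group G
    by (rule G)
  have "filter (\<lambda>j. j = k \<or> j = k') ps \<in> {[k, k'], [k', k]}"
    using distinct_ps set_ps_tags k k' \<open>k \<noteq> k'\<close> by (intro filter_eq_pair) auto
  moreover have "list_prod G (map x (filter (\<lambda>j. j = k \<or> j = k') ps)) \<in> K"
    unfolding x_def using G adm g drop k k' distinct_tags[of n]
    by (intro filter_tag_powers_mem) (auto simp: nth_eq_iff_index_eq)
  moreover have "x j \<in> carrier G" if "j < length (tags n)" for j
    using nth_mem[OF that] g unfolding x_def
    by (intro G.int_pow_closed G.tag_elem_closed[where n = n]) (auto simp: set_tags)
  ultimately show ?thesis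
    using k k' by (auto simp: list_prod_def)
qed

end

section \<open>The unitriangular group \<open>UT\<^sub>5(\<int>)\<close>\<close>

text \<open>\<open>U a\<^sub>1\<^sub>2 a\<^sub>2\<^sub>3 a\<^sub>3\<^sub>4 a\<^sub>4\<^sub>5 a\<^sub>1\<^sub>3 a\<^sub>2\<^sub>4 a\<^sub>3\<^sub>5 a\<^sub>1\<^sub>4 a\<^sub>2\<^sub>5 a\<^sub>1\<^sub>5\<close> is the matrix
  \<open>I + \<Sum> a\<^sub>i\<^sub>j E\<^sub>i\<^sub>j\<close>; \<open>umul\<close> is matrix multiplication in these coordinates.\<close>

datatype ut5 = U int int int int int int int int int int

fun umul :: "ut5 \<Rightarrow> ut5 \<Rightarrow> ut5" where
  "umul (U x1 x2 x3 x4 x5 x6 x7 x8 x9 x10) (U y1 y2 y3 y4 y5 y6 y7 y8 y9 y10) =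
    U (x1 + y1) (x2 + y2) (x3 + y3) (x4 + y4)
      (x5 + y5 + x1 * y2) (x6 + y6 + x2 * y3) (x7 + y7 + x3 * y4)
      (x8 + y8 + x1 * y6 + x5 * y3) (x9 + y9 + x2 * y7 + x6 * y4)
      (x10 + y10 + x1 * y9 + x5 * y7 + x8 * y4)"

fun uinv :: "ut5 \<Rightarrow> ut5" where
  "uinv (U x1 x2 x3 x4 x5 x6 x7 x8 x9 x10) =
    (let y5 = - x5 + x1 * x2; y6 = - x6 + x2 * x3; y7 = - x7 + x3 * x4;
         y8 = - x8 - x1 * y6 + x5 * x3; y9 = - x9 - x2 * y7 + x6 * x4;
         y10 = - x10 - x1 * y9 - x5 * y7 + x8 * x4
     in U (- x1) (- x2) (- x3) (- x4) y5 y6 y7 y8 y9 y10)"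

definition uone :: ut5 where
  "uone = U 0 0 0 0 0 0 0 0 0 0"

definition UT :: "ut5 monoid" where
  "UT = \<lparr>carrier = UNIV, monoid.mult = umul, one = uone\<rparr>"

lemma UT_simps [simp]: "carrier UT = UNIV" "x \<otimes>\<^bsub>UT\<^esub> y = umul x y" "\<one>\<^bsub>UT\<^esub> = uone"
  by (simp_all add: UT_def)

lemma group_UT: "group UT"
proof (rule groupI)
  fix x y z :: ut5
  show "x \<otimes>\<^bsub>UT\<^esub> y \<otimes>\<^bsub>UT\<^esub> z = x \<otimes>\<^bsub>UT\<^esub> (y \<otimes>\<^bsub>UT\<^esub> z)"
    by (cases x; cases y; cases z) (simp add: algebra_simps)
  show "\<one>\<^bsub>UT\<^esub> \<otimes>\<^bsub>UT\<^esub> x = x"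
    by (cases x) (simp add: uone_def)
  show "\<exists>y\<in>carrier UT. y \<otimes>\<^bsub>UT\<^esub> x = \<one>\<^bsub>UT\<^esub>"
    by (rule bexI[of _ "uinv x"]) (cases x; simp add: uone_def Let_def algebra_simps)+
qed simp_all

interpretation UT: group UT
  by (rule group_UT)

lemma UT_inv [simp]: "inv\<^bsub>UT\<^esub> x = uinv x"
  by (rule UT.inv_equality) (cases x; simp add: uone_def Let_def algebra_simps)+

text \<open>Powers: with \<open>X = x - I\<close> strictly upper triangular,
  \<open>x\<^sup>m = I + \<Sum>k = 1..4. (m choose k) X\<^sup>k\<close>; \<open>nil_mult\<close> multiplies strictly upper triangular parts.\<close>

fun nil_mult :: "ut5 \<Rightarrow> ut5 \<Rightarrow> ut5" where
  "nil_mult (U x1 x2 x3 x4 x5 x6 x7 x8 x9 x10) (U y1 y2 y3 y4 y5 y6 y7 y8 y9 y10) =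
    U 0 0 0 0 (x1 * y2) (x2 * y3) (x3 * y4) (x1 * y6 + x5 * y3) (x2 * y7 + x6 * y4)
      (x1 * y9 + x5 * y7 + x8 * y4)"

fun nil_add :: "ut5 \<Rightarrow> ut5 \<Rightarrow> ut5" where
  "nil_add (U x1 x2 x3 x4 x5 x6 x7 x8 x9 x10) (U y1 y2 y3 y4 y5 y6 y7 y8 y9 y10) =
    U (x1 + y1) (x2 + y2) (x3 + y3) (x4 + y4) (x5 + y5) (x6 + y6) (x7 + y7) (x8 + y8) (x9 + y9)
      (x10 + y10)"

fun nil_scale :: "int \<Rightarrow> ut5 \<Rightarrow> ut5" where
  "nil_scale k (U x1 x2 x3 x4 x5 x6 x7 x8 x9 x10) =
    U (k * x1) (k * x2) (k * x3) (k * x4) (k * x5) (k * x6) (k * x7) (k * x8) (k * x9) (k * x10)"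

definition upow :: "nat \<Rightarrow> ut5 \<Rightarrow> ut5" where
  "upow m x = (let x2 = nil_mult x x; x3 = nil_mult x2 x; x4 = nil_mult x3 x in
     nil_add (nil_add (nil_scale (int m) x) (nil_scale (int (m choose 2)) x2))
             (nil_add (nil_scale (int (m choose 3)) x3) (nil_scale (int (m choose 4)) x4)))"

lemma upow_Suc: "upow (Suc m) x = umul (upow m x) x"
proof -
  have "int (Suc m choose 2) = int (m choose 2) + int m"
    and "int (Suc m choose 3) = int (m choose 3) + int (m choose 2)"
    and "int (Suc m choose 4) = int (m choose 4) + int (m choose 3)"
    by (simp_all add: eval_nat_numeral)
  then show ?thesis
    by (cases x) (simp add: upow_def algebra_simps)
qed

lemma UT_pow [simp]: "x [^]\<^bsub>UT\<^esub> (m::nat) = upow m x"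
proof (induction m)
  case 0
  show ?case
    by (cases x) (simp add: upow_def uone_def binomial_eq_0)
qed (simp add: upow_Suc)

lemma UT_int_pow_corner:
  "U 0 0 0 0 0 0 0 a b c [^]\<^bsub>UT\<^esub> (z::int) = U 0 0 0 0 0 0 0 (z * a) (z * b) (z * c)"
  by (simp add: int_pow_def2 upow_def Let_def)

lemma int_two_mult_choose_two: "2 * int (m choose 2) = int m * (int m - 1)"
proof -
  have "2 * (m choose 2) = m * (m - 1)"
    by (induction m) (auto simp: eval_nat_numeral algebra_simps)
  then have "int (2 * (m choose 2)) = int (m * (m - 1))"
    by (simp only:)
  then show ?thesis
    by (cases m) (auto simp: algebra_simps)
qed

lemma int_dvd_two_mult_choose_two: "int m dvd 2 * int (m choose 2)"
  by (simp add: int_two_mult_choose_two)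

lemma int_gcd_choose_two_dvd:
  "int (gcd m (m choose 2)) dvd int m" "int (gcd m (m choose 2)) dvd int (m choose 2)"
  by (simp_all add: int_dvd_int_iff)

lemma int_gcd_two_dvd: "int (gcd 2 m) dvd int m" "int (gcd 2 m) dvd 2"
  by (simp add: int_dvd_int_iff) (metis gcd_dvd1 int_dvd_int_iff of_nat_numeral)

lemma int_choose_two_mult:
  "int ((a * q) choose 2) = int q * int (a choose 2) + int a * int a * int (q choose 2)"
proof -
  have "2 * (int q * int (a choose 2) + int a * int a * int (q choose 2))
      = int q * (2 * int (a choose 2)) + int a * int a * (2 * int (q choose 2))"
    by (simp add: algebra_simps)
  also have "\<dots> = int q * (int a * (int a - 1)) + int a * int a * (int q * (int q - 1))"
    by (simp only: int_two_mult_choose_two)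
  also have "\<dots> = int (a * q) * (int (a * q) - 1)"
    by (simp add: algebra_simps)
  also have "\<dots> = 2 * int ((a * q) choose 2)"
    by (simp only: int_two_mult_choose_two)
  finally show ?thesis
    by (metis mult_left_cancel zero_neq_numeral)
qed

lemma gcd_choose_two_dvd_gcd_choose_two:
  assumes "m1 dvd m2"
  shows "gcd m1 (m1 choose 2) dvd gcd m2 (m2 choose 2)"
proof -
  obtain q where q: "m2 = m1 * q"
    using assms by blast
  have "int (gcd m1 (m1 choose 2)) dvd int q * int (m1 choose 2) + int m1 * int m1 * int (q choose 2)"
    by (intro dvd_add dvd_mult dvd_mult2) (simp_all add: int_dvd_int_iff)
  then have "int (gcd m1 (m1 choose 2)) dvd int (m2 choose 2)"
    by (simp only: q int_choose_two_mult)
  then have "gcd m1 (m1 choose 2) dvd m2 choose 2"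
    by (simp only: int_dvd_int_iff)
  then show ?thesis
    using assms by (simp add: dvd_trans[OF gcd_dvd1])
qed

section \<open>Test subgroups of \<open>UT\<^sub>5(\<int>)\<close>\<close>

text \<open>\<open>Eij\<close> denotes \<open>I + e\<^sub>i\<^sub>j\<close>, and \<open>Eij_kl\<close> denotes \<open>I + e\<^sub>i\<^sub>j + e\<^sub>k\<^sub>l\<close>.\<close>

definition E12 :: ut5 where "E12 = U 1 0 0 0 0 0 0 0 0 0"
definition E13 :: ut5 where "E13 = U 0 0 0 0 1 0 0 0 0 0"
definition E24 :: ut5 where "E24 = U 0 0 0 0 0 1 0 0 0 0"
definition E34 :: ut5 where "E34 = U 0 0 1 0 0 0 0 0 0 0"
definition E24_34 :: ut5 where "E24_34 = U 0 0 1 0 0 1 0 0 0 0"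
definition E12_23 :: ut5 where "E12_23 = U 1 1 0 0 0 0 0 0 0 0"
definition E12_23_34 :: ut5 where "E12_23_34 = U 1 1 1 0 0 0 0 0 0 0"
definition E23_45 :: ut5 where "E23_45 = U 0 1 0 1 0 0 0 0 0 0"

lemmas elementary_defs = E12_def E13_def E24_def E34_def E24_34_def E12_23_def E12_23_34_def
  E23_45_def uone_def

lemma admissible_UTI:
  assumes "subgroup K UT" and "normalizes UT C K" and "range g \<subseteq> C"
    and "\<And>r q. r \<in> relators UT g n m1 m2 \<Longrightarrow> comm UT r (g q) \<in> K"
  shows "admissible UT g K n m1 m2"
  using assms by (auto simp: admissible_def intro: normalizes_subset)

lemmas dvd_simps = dvd_add_right_iff dvd_add_left_iff dvd_mult dvd_mult2 dvd_minus_iff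
  dvd_diff_right_iff dvd_diff_left_iff

lemmas UT_comm_simps = comm_def comm3_def comm4_def upow_def Let_def

definition assign_pair :: "nat \<Rightarrow> nat \<Rightarrow> ut5 \<Rightarrow> ut5 \<Rightarrow> ut5 \<Rightarrow> ut5 \<Rightarrow> nat \<times> bool \<Rightarrow> ut5" where
  "assign_pair i j a1 ax b1 bx = (\<lambda>(p, x). if p = i then (if x then ax else a1)
                                       else if p = j then (if x then bx else b1) else uone)"

lemma range_assign_pair:
  "\<lbrakk>a1 \<in> C; ax \<in> C; b1 \<in> C; bx \<in> C; uone \<in> C\<rbrakk> \<Longrightarrow> range (assign_pair i j a1 ax b1 bx) \<subseteq> C"
  by (auto simp: assign_pair_def)

fun in_K_comm :: "int \<Rightarrow> ut5 \<Rightarrow> bool" where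
  "in_K_comm N (U x1 x2 x3 x4 x5 x6 x7 x8 x9 x10) \<longleftrightarrow>
     x1 = 0 \<and> x2 = 0 \<and> x3 = 0 \<and> x4 = 0 \<and> x5 = 0 \<and> x6 = 0 \<and> x7 = 0 \<and> N dvd x8"

abbreviation K_comm :: "int \<Rightarrow> ut5 set" where
  "K_comm N \<equiv> {u. in_K_comm N u}"

lemma subgroup_K_comm: "subgroup (K_comm N) UT"
proof (rule UT.subgroupI)
  have "uone \<in> K_comm N"
    by (simp add: uone_def)
  then show "K_comm N \<noteq> {}"
    by blast
  fix a b
  assume "a \<in> K_comm N" "b \<in> K_comm N"
  then show "inv\<^bsub>UT\<^esub> a \<in> K_comm N" and "a \<otimes>\<^bsub>UT\<^esub> b \<in> K_comm N"
    by (cases a; cases b; auto simp: Let_def)+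
qed simp

lemma normalizes_K_comm: "normalizes UT {uone, E12, E13, E24, E34, E24_34} (K_comm N)"
  unfolding normalizes_def by (auto simp: elementary_defs elim!: in_K_comm.elims)

definition test1 :: "nat \<Rightarrow> nat \<times> bool \<Rightarrow> ut5" where "test1 i = assign_pair i i E12 E24 uone uone"

lemma admissible_test1: "m1 dvd m2 \<Longrightarrow> admissible UT (test1 i) (K_comm (int m1)) n m1 m2"
proof (rule admissible_UTI[OF subgroup_K_comm normalizes_K_comm])
  show "range (test1 i) \<subseteq> {uone, E12, E13, E24, E34, E24_34}"
    unfolding test1_def by (rule range_assign_pair) auto
  fix r q
  assume "m1 dvd m2" and "r \<in> relators UT (test1 i) n m1 m2"
  then show "comm UT r (test1 i q) \<in> K_comm (int m1)"
    unfolding relators_def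
    apply (cases q)
    apply (elim UnE CollectE exE conjE)
    apply (auto simp: test1_def assign_pair_def elementary_defs UT_comm_simps)
    apply (simp_all add: algebra_simps dvd_simps)?
    done
qed

lemma tag_elem_test1_mem:
  "tag_in_range n t \<Longrightarrow> t \<noteq> T1 i \<Longrightarrow> tag_elem UT (test1 i) t \<in> K_comm N"
  by (cases t) (auto simp: test1_def assign_pair_def elementary_defs UT_comm_simps)

lemma tag_elem_test1_target:
  "tag_elem UT (test1 i) (T1 i) = U 0 0 0 0 0 0 0 1 0 0"
  by (simp add: test1_def assign_pair_def elementary_defs UT_comm_simps)

definition test2 :: "nat \<Rightarrow> nat \<Rightarrow> nat \<times> bool \<Rightarrow> ut5" where "test2 i j = assign_pair i j E12 E12 E24 E24"

lemma admissible_test2: "m1 dvd m2 \<Longrightarrow> admissible UT (test2 i j) (K_comm (int m2)) n m1 m2"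
proof (rule admissible_UTI[OF subgroup_K_comm normalizes_K_comm])
  show "range (test2 i j) \<subseteq> {uone, E12, E13, E24, E34, E24_34}"
    unfolding test2_def by (rule range_assign_pair) auto
  fix r q
  assume "m1 dvd m2" and "r \<in> relators UT (test2 i j) n m1 m2"
  then show "comm UT r (test2 i j q) \<in> K_comm (int m2)"
    unfolding relators_def
    apply (cases q)
    apply (elim UnE CollectE exE conjE)
    apply (auto simp: test2_def assign_pair_def elementary_defs UT_comm_simps)
    apply (simp_all add: algebra_simps dvd_simps)?
    done
qed

lemma tag_elem_test2_mem:
  "i + 2 \<le> j \<Longrightarrow> tag_in_range n t \<Longrightarrow> t \<noteq> T2 i j \<Longrightarrow> tag_elem UT (test2 i j) t \<in> K_comm N"
  by (cases t) (auto simp: test2_def assign_pair_def elementary_defs UT_comm_simps)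

lemma tag_elem_test2_target:
  "i + 2 \<le> j \<Longrightarrow> tag_elem UT (test2 i j) (T2 i j) = U 0 0 0 0 0 0 0 1 0 0"
  by (simp_all add: test2_def assign_pair_def elementary_defs UT_comm_simps)

definition test3 :: "nat \<Rightarrow> nat \<Rightarrow> nat \<times> bool \<Rightarrow> ut5" where "test3 i j = assign_pair i j E12 E13 E34 E24_34"

lemma admissible_test3: "m1 dvd m2 \<Longrightarrow> admissible UT (test3 i j) (K_comm (int m1)) n m1 m2"
proof (rule admissible_UTI[OF subgroup_K_comm normalizes_K_comm])
  show "range (test3 i j) \<subseteq> {uone, E12, E13, E24, E34, E24_34}"
    unfolding test3_def by (rule range_assign_pair) auto
  fix r q
  assume "m1 dvd m2" and "r \<in> relators UT (test3 i j) n m1 m2"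
  then show "comm UT r (test3 i j q) \<in> K_comm (int m1)"
    unfolding relators_def
    apply (cases q)
    apply (elim UnE CollectE exE conjE)
    apply (auto simp: test3_def assign_pair_def elementary_defs UT_comm_simps)
    apply (simp_all add: algebra_simps dvd_simps)?
    done
qed

lemma tag_elem_test3_mem:
  "i + 2 \<le> j \<Longrightarrow> tag_in_range n t \<Longrightarrow> t \<noteq> T3 i j \<Longrightarrow> tag_elem UT (test3 i j) t \<in> K_comm N"
  by (cases t) (auto simp: test3_def assign_pair_def elementary_defs UT_comm_simps)

lemma tag_elem_test3_target:
  "i + 2 \<le> j \<Longrightarrow> tag_elem UT (test3 i j) (T3 i j) = U 0 0 0 0 0 0 0 1 0 0"
  by (simp_all add: test3_def assign_pair_def elementary_defs UT_comm_simps)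

definition test4 :: "nat \<Rightarrow> nat \<Rightarrow> nat \<times> bool \<Rightarrow> ut5" where "test4 i j = assign_pair i j uone E12 E24 uone"

lemma admissible_test4: "m1 dvd m2 \<Longrightarrow> admissible UT (test4 i j) (K_comm (int m1)) n m1 m2"
proof (rule admissible_UTI[OF subgroup_K_comm normalizes_K_comm])
  show "range (test4 i j) \<subseteq> {uone, E12, E13, E24, E34, E24_34}"
    unfolding test4_def by (rule range_assign_pair) auto
  fix r q
  assume "m1 dvd m2" and "r \<in> relators UT (test4 i j) n m1 m2"
  then show "comm UT r (test4 i j q) \<in> K_comm (int m1)"
    unfolding relators_def
    apply (cases q)
    apply (elim UnE CollectE exE conjE)
    apply (auto simp: test4_def assign_pair_def elementary_defs UT_comm_simps)
    apply (simp_all add: algebra_simps dvd_simps)?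
    done
qed

lemma tag_elem_test4_mem:
  "i + 2 \<le> j \<Longrightarrow> tag_in_range n t \<Longrightarrow> t \<noteq> T4 i j \<Longrightarrow> tag_elem UT (test4 i j) t \<in> K_comm N"
  by (cases t) (auto simp: test4_def assign_pair_def elementary_defs UT_comm_simps)

lemma tag_elem_test4_target:
  "i + 2 \<le> j \<Longrightarrow> tag_elem UT (test4 i j) (T4 i j) = U 0 0 0 0 0 0 0 1 0 0"
  by (simp_all add: test4_def assign_pair_def elementary_defs UT_comm_simps)

definition test5 :: "nat \<Rightarrow> nat \<Rightarrow> nat \<times> bool \<Rightarrow> ut5" where "test5 i j = assign_pair i j E12 uone uone E24"

lemma admissible_test5: "m1 dvd m2 \<Longrightarrow> admissible UT (test5 i j) (K_comm (int m1)) n m1 m2"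
proof (rule admissible_UTI[OF subgroup_K_comm normalizes_K_comm])
  show "range (test5 i j) \<subseteq> {uone, E12, E13, E24, E34, E24_34}"
    unfolding test5_def by (rule range_assign_pair) auto
  fix r q
  assume "m1 dvd m2" and "r \<in> relators UT (test5 i j) n m1 m2"
  then show "comm UT r (test5 i j q) \<in> K_comm (int m1)"
    unfolding relators_def
    apply (cases q)
    apply (elim UnE CollectE exE conjE)
    apply (auto simp: test5_def assign_pair_def elementary_defs UT_comm_simps)
    apply (simp_all add: algebra_simps dvd_simps)?
    done
qed

lemma tag_elem_test5_mem:
  "i + 2 \<le> j \<Longrightarrow> tag_in_range n t \<Longrightarrow> t \<noteq> T5 i j \<Longrightarrow> tag_elem UT (test5 i j) t \<in> K_comm N"
  by (cases t) (auto simp: test5_def assign_pair_def elementary_defs UT_comm_simps)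

lemma tag_elem_test5_target:
  "i + 2 \<le> j \<Longrightarrow> tag_elem UT (test5 i j) (T5 i j) = U 0 0 0 0 0 0 0 1 0 0"
  by (simp_all add: test5_def assign_pair_def elementary_defs UT_comm_simps)

definition test6 :: "nat \<Rightarrow> nat \<times> bool \<Rightarrow> ut5" where "test6 i = assign_pair i (i+1) E12 uone uone E24"

lemma admissible_test6: "m1 dvd m2 \<Longrightarrow> admissible UT (test6 i) (K_comm (int m1)) n m1 m2"
proof (rule admissible_UTI[OF subgroup_K_comm normalizes_K_comm])
  show "range (test6 i) \<subseteq> {uone, E12, E13, E24, E34, E24_34}"
    unfolding test6_def by (rule range_assign_pair) auto
  fix r q
  assume "m1 dvd m2" and "r \<in> relators UT (test6 i) n m1 m2"
  then show "comm UT r (test6 i q) \<in> K_comm (int m1)"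
    unfolding relators_def
    apply (cases q)
    apply (elim UnE CollectE exE conjE)
    apply (auto simp: test6_def assign_pair_def elementary_defs UT_comm_simps)
    apply (simp_all add: algebra_simps dvd_simps)?
    done
qed

lemma tag_elem_test6_mem:
  "tag_in_range n t \<Longrightarrow> t \<noteq> T6 i \<Longrightarrow> tag_elem UT (test6 i) t \<in> K_comm N"
  by (cases t) (auto simp: test6_def assign_pair_def elementary_defs UT_comm_simps)

lemma tag_elem_test6_target:
  "tag_elem UT (test6 i) (T6 i) = U 0 0 0 0 0 0 0 1 0 0"
  by (simp add: test6_def assign_pair_def elementary_defs UT_comm_simps)

definition test7 :: "nat \<Rightarrow> nat \<times> bool \<Rightarrow> ut5" where "test7 i = assign_pair i (i+1) uone E12 uone E24"

lemma admissible_test7: "m1 dvd m2 \<Longrightarrow> admissible UT (test7 i) (K_comm (int m1)) n m1 m2"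
proof (rule admissible_UTI[OF subgroup_K_comm normalizes_K_comm])
  show "range (test7 i) \<subseteq> {uone, E12, E13, E24, E34, E24_34}"
    unfolding test7_def by (rule range_assign_pair) auto
  fix r q
  assume "m1 dvd m2" and "r \<in> relators UT (test7 i) n m1 m2"
  then show "comm UT r (test7 i q) \<in> K_comm (int m1)"
    unfolding relators_def
    apply (cases q)
    apply (elim UnE CollectE exE conjE)
    apply (auto simp: test7_def assign_pair_def elementary_defs UT_comm_simps)
    apply (simp_all add: algebra_simps dvd_simps)?
    done
qed

lemma tag_elem_test7_mem:
  "tag_in_range n t \<Longrightarrow> t \<noteq> T7 i \<Longrightarrow> tag_elem UT (test7 i) t \<in> K_comm N"
  by (cases t) (auto simp: test7_def assign_pair_def elementary_defs UT_comm_simps)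

lemma tag_elem_test7_target:
  "tag_elem UT (test7 i) (T7 i) = U 0 0 0 0 0 0 0 1 0 0"
  by (simp add: test7_def assign_pair_def elementary_defs UT_comm_simps)

lemma minus_mult_div_cancel_left [simp]: "m \<noteq> 0 \<Longrightarrow> - (m * t) div m = - (t::int)"
  by (metis mult_minus_right nonzero_mult_div_cancel_left)

fun in_K_tri :: "int \<Rightarrow> int \<Rightarrow> ut5 \<Rightarrow> bool" where
  "in_K_tri m c (U x1 x2 x3 x4 x5 x6 x7 x8 x9 x10) \<longleftrightarrow>
     x1 = 0 \<and> x2 = 0 \<and> x3 = 0 \<and> x4 = 0 \<and> x5 = 0 \<and> x7 = 0 \<and> m dvd x6 \<and> m dvd x8 + c * (x6 div m)"

abbreviation K_tri :: "int \<Rightarrow> int \<Rightarrow> ut5 set" where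
  "K_tri m c \<equiv> {u. in_K_tri m c u}"

lemma K_tri_memE:
  assumes "u \<in> K_tri m c" and m: "m \<noteq> 0"
  obtains t x8 x9 x10 where "u = U 0 0 0 0 0 (m * t) 0 x8 x9 x10" and "m dvd x8 + c * t"
proof (cases u)
  case (U x1 x2 x3 x4 x5 x6 x7 x8 x9 x10)
  with assms(1) have h: "x1 = 0" "x2 = 0" "x3 = 0" "x4 = 0" "x5 = 0" "x7 = 0" "m dvd x6"
    and h8: "m dvd x8 + c * (x6 div m)"
    by simp_all
  from h(7) obtain t where t: "x6 = m * t"
    by (rule dvdE)
  with h8 m have "m dvd x8 + c * t"
    by simp
  with U h t show ?thesis
    by (intro that[of t x8 x9 x10]) simp_all
qed

lemma subgroup_K_tri:
  assumes m: "m \<noteq> 0"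
  shows "subgroup (K_tri m c) UT"
proof (rule UT.subgroupI)
  have "uone \<in> K_tri m c"
    by (simp add: uone_def)
  then show "K_tri m c \<noteq> {}"
    by blast
next
  fix a
  assume "a \<in> K_tri m c"
  then obtain t x8 x9 x10 where a: "a = U 0 0 0 0 0 (m * t) 0 x8 x9 x10" and t: "m dvd x8 + c * t"
    using m by (rule K_tri_memE)
  have "m dvd - (x8 + c * t)"
    using t by (simp only: dvd_minus_iff)
  then show "inv\<^bsub>UT\<^esub> a \<in> K_tri m c"
    using a m by (simp add: Let_def algebra_simps)
next
  fix a b
  assume "a \<in> K_tri m c" "b \<in> K_tri m c"
  obtain t x8 x9 x10 where a: "a = U 0 0 0 0 0 (m * t) 0 x8 x9 x10" "m dvd x8 + c * t"
    using \<open>a \<in> K_tri m c\<close> m by (rule K_tri_memE)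
  obtain s y8 y9 y10 where b: "b = U 0 0 0 0 0 (m * s) 0 y8 y9 y10" "m dvd y8 + c * s"
    using \<open>b \<in> K_tri m c\<close> m by (rule K_tri_memE)
  have "m * t + m * s = m * (t + s)"
    by (simp add: algebra_simps)
  moreover have "m dvd (x8 + c * t) + (y8 + c * s)"
    using a(2) b(2) by (rule dvd_add)
  ultimately show "a \<otimes>\<^bsub>UT\<^esub> b \<in> K_tri m c"
    using a b m by (simp add: algebra_simps)
qed simp

lemma normalizes_K_tri:
  assumes m: "m \<noteq> 0"
  shows "normalizes UT {uone, E12_23, E12_23_34} (K_tri m c)"
  unfolding normalizes_def
proof (intro ballI)
  fix x k
  assume "x \<in> {uone, E12_23, E12_23_34}" "k \<in> K_tri m c"
  moreover obtain t x8 x9 x10 where k: "k = U 0 0 0 0 0 (m * t) 0 x8 x9 x10" "m dvd x8 + c * t"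
    using calculation(2) m by (rule K_tri_memE)
  moreover have "m dvd x8 + (c * t + m * t)" and "m dvd x8 + (c * t - m * t)"
    using dvd_add[OF k(2), of "m * t"] dvd_diff[OF k(2), of "m * t"] by (simp_all add: algebra_simps)
  ultimately show "x \<otimes>\<^bsub>UT\<^esub> k \<otimes>\<^bsub>UT\<^esub> inv\<^bsub>UT\<^esub> x \<in> K_tri m c \<and> inv\<^bsub>UT\<^esub> x \<otimes>\<^bsub>UT\<^esub> k \<otimes>\<^bsub>UT\<^esub> x \<in> K_tri m c"
    using m by (auto simp: elementary_defs algebra_simps)
qed

definition test8 :: "nat \<Rightarrow> nat \<times> bool \<Rightarrow> ut5" where
  "test8 i = assign_pair i (i+1) E12_23 E12_23 E12_23_34 E12_23_34"

definition test10 :: "nat \<Rightarrow> nat \<times> bool \<Rightarrow> ut5" where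
  "test10 i = assign_pair i (i+1) E12_23 uone E12_23_34 uone"

lemma admissible_test8: "0 < m2 \<Longrightarrow> admissible UT (test8 i) (K_tri (int m2) (int (m2 choose 2))) n m1 m2"
proof (rule admissible_UTI[OF subgroup_K_tri normalizes_K_tri])
  show "range (test8 i) \<subseteq> {uone, E12_23, E12_23_34}"
    unfolding test8_def by (rule range_assign_pair) auto
  fix r q
  assume "0 < m2" and "r \<in> relators UT (test8 i) n m1 m2"
  then show "comm UT r (test8 i q) \<in> K_tri (int m2) (int (m2 choose 2))"
    using int_dvd_two_mult_choose_two[of m2]
    unfolding relators_def
    apply (cases q)
    apply (elim UnE CollectE exE conjE)
    apply (auto simp: test8_def assign_pair_def elementary_defs UT_comm_simps)
    apply (simp_all add: algebra_simps dvd_simps)?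
    done
qed simp_all

lemma tag_elem_test8_mem:
  "0 < m \<Longrightarrow> tag_in_range n t \<Longrightarrow> t \<noteq> T8 i \<Longrightarrow> tag_elem UT (test8 i) t \<in> K_tri (int m) (int (m choose 2))"
  by (cases t) (auto simp: test8_def assign_pair_def elementary_defs UT_comm_simps)

lemma tag_elem_test8_target:
  "tag_elem UT (test8 i) (T8 i) = U 0 0 0 0 0 0 0 (- 1) 0 0"
  by (simp add: test8_def assign_pair_def elementary_defs UT_comm_simps)

lemma admissible_test10: "0 < m1 \<Longrightarrow> admissible UT (test10 i) (K_tri (int m1) (int (m1 choose 2))) n m1 m2"
proof (rule admissible_UTI[OF subgroup_K_tri normalizes_K_tri])
  show "range (test10 i) \<subseteq> {uone, E12_23, E12_23_34}"
    unfolding test10_def by (rule range_assign_pair) auto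
  fix r q
  assume "0 < m1" and "r \<in> relators UT (test10 i) n m1 m2"
  then show "comm UT r (test10 i q) \<in> K_tri (int m1) (int (m1 choose 2))"
    using int_dvd_two_mult_choose_two[of m1]
    unfolding relators_def
    apply (cases q)
    apply (elim UnE CollectE exE conjE)
    apply (auto simp: test10_def assign_pair_def elementary_defs UT_comm_simps)
    apply (simp_all add: algebra_simps dvd_simps)?
    done
qed simp_all

lemma tag_elem_test10_mem:
  "0 < m \<Longrightarrow> tag_in_range n t \<Longrightarrow> t \<noteq> T10 i \<Longrightarrow> t \<noteq> T8 i \<Longrightarrow> tag_elem UT (test10 i) t \<in> K_tri (int m) (int (m choose 2))"
  by (cases t) (auto simp: test10_def assign_pair_def elementary_defs UT_comm_simps)

lemma tag_elem_test10_target: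
  "tag_elem UT (test10 i) (T10 i) = U 0 0 0 0 0 0 0 1 0 0"
  "tag_elem UT (test10 i) (T8 i) = U 0 0 0 0 0 0 0 (- 1) 0 0"
  by (simp_all add: test10_def assign_pair_def elementary_defs UT_comm_simps)

fun in_K_tri_diff :: "int \<Rightarrow> int \<Rightarrow> ut5 \<Rightarrow> bool" where
  "in_K_tri_diff m d (U x1 x2 x3 x4 x5 x6 x7 x8 x9 x10) \<longleftrightarrow>
     x1 = 0 \<and> x2 = 0 \<and> x3 = 0 \<and> x4 = 0 \<and> x6 = 0 \<and> x7 = 0 \<and> m dvd x5 \<and> d dvd x8"

abbreviation K_tri_diff :: "int \<Rightarrow> int \<Rightarrow> ut5 set" where
  "K_tri_diff m d \<equiv> {u. in_K_tri_diff m d u}"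

lemma subgroup_K_tri_diff: "subgroup (K_tri_diff m d) UT"
proof (rule UT.subgroupI)
  have "uone \<in> K_tri_diff m d"
    by (simp add: uone_def)
  then show "K_tri_diff m d \<noteq> {}"
    by blast
  fix a b
  assume "a \<in> K_tri_diff m d" "b \<in> K_tri_diff m d"
  then show "inv\<^bsub>UT\<^esub> a \<in> K_tri_diff m d" and "a \<otimes>\<^bsub>UT\<^esub> b \<in> K_tri_diff m d"
    by (cases a; cases b; auto simp: Let_def)+
qed simp

lemma normalizes_K_tri_diff:
  assumes "d dvd m"
  shows "normalizes UT {uone, E12, E12_23_34} (K_tri_diff m d)"
  unfolding normalizes_def
proof (intro ballI)
  fix x k
  assume "x \<in> {uone, E12, E12_23_34}" "k \<in> K_tri_diff m d"
  moreover obtain x5 x8 x9 x10 where k: "k = U 0 0 0 0 x5 0 0 x8 x9 x10" "m dvd x5" "d dvd x8"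
    using calculation(2) by (cases k) auto
  moreover have "d dvd x5"
    using k(2) assms by (rule dvd_trans[rotated])
  ultimately show "x \<otimes>\<^bsub>UT\<^esub> k \<otimes>\<^bsub>UT\<^esub> inv\<^bsub>UT\<^esub> x \<in> K_tri_diff m d \<and> inv\<^bsub>UT\<^esub> x \<otimes>\<^bsub>UT\<^esub> k \<otimes>\<^bsub>UT\<^esub> x \<in> K_tri_diff m d"
    by (auto simp: elementary_defs dvd_simps)
qed

definition test9 :: "nat \<Rightarrow> nat \<times> bool \<Rightarrow> ut5" where
  "test9 i = assign_pair i (i+1) E12 E12 E12_23_34 E12_23_34"

definition test11 :: "nat \<Rightarrow> nat \<times> bool \<Rightarrow> ut5" where
  "test11 i = assign_pair i (i+1) E12 uone E12_23_34 uone"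

lemma admissible_test9:
  "admissible UT (test9 i) (K_tri_diff (int m2) (int (gcd m2 (m2 choose 2)))) n m1 m2"
proof (rule admissible_UTI[OF subgroup_K_tri_diff normalizes_K_tri_diff])
  show "range (test9 i) \<subseteq> {uone, E12, E12_23_34}"
    unfolding test9_def by (rule range_assign_pair) auto
  fix r q
  assume "r \<in> relators UT (test9 i) n m1 m2"
  then show "comm UT r (test9 i q) \<in> K_tri_diff (int m2) (int (gcd m2 (m2 choose 2)))"
    using int_gcd_choose_two_dvd[of m2]
    unfolding relators_def
    apply (cases q)
    apply (elim UnE CollectE exE conjE)
    apply (auto simp: test9_def assign_pair_def elementary_defs UT_comm_simps)
    apply (simp_all add: algebra_simps dvd_simps)?
    done
qed (rule int_gcd_choose_two_dvd)

lemma tag_elem_test9_mem: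
  "tag_in_range n t \<Longrightarrow> t \<noteq> T9 i \<Longrightarrow> tag_elem UT (test9 i) t \<in> K_tri_diff m d"
  by (cases t) (auto simp: test9_def assign_pair_def elementary_defs UT_comm_simps)

lemma tag_elem_test9_target:
  "tag_elem UT (test9 i) (T9 i) = U 0 0 0 0 0 0 0 1 0 0"
  by (simp add: test9_def assign_pair_def elementary_defs UT_comm_simps)

lemma admissible_test11:
  "admissible UT (test11 i) (K_tri_diff (int m1) (int (gcd m1 (m1 choose 2)))) n m1 m2"
proof (rule admissible_UTI[OF subgroup_K_tri_diff normalizes_K_tri_diff])
  show "range (test11 i) \<subseteq> {uone, E12, E12_23_34}"
    unfolding test11_def by (rule range_assign_pair) auto
  fix r q
  assume "r \<in> relators UT (test11 i) n m1 m2"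
  then show "comm UT r (test11 i q) \<in> K_tri_diff (int m1) (int (gcd m1 (m1 choose 2)))"
    using int_gcd_choose_two_dvd[of m1]
    unfolding relators_def
    apply (cases q)
    apply (elim UnE CollectE exE conjE)
    apply (auto simp: test11_def assign_pair_def elementary_defs UT_comm_simps)
    apply (simp_all add: algebra_simps dvd_simps)?
    done
qed (rule int_gcd_choose_two_dvd)

lemma tag_elem_test11_mem:
  "tag_in_range n t \<Longrightarrow> t \<noteq> T11 i \<Longrightarrow> t \<noteq> T9 i \<Longrightarrow> tag_elem UT (test11 i) t \<in> K_tri_diff m d"
  by (cases t) (auto simp: test11_def assign_pair_def elementary_defs UT_comm_simps)

lemma tag_elem_test11_target:
  "tag_elem UT (test11 i) (T11 i) = U 0 0 0 0 0 0 0 1 0 0"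
  "tag_elem UT (test11 i) (T9 i) = U 0 0 0 0 0 0 0 1 0 0"
  by (simp_all add: test11_def assign_pair_def elementary_defs UT_comm_simps)

fun in_K_quad :: "int \<Rightarrow> int \<Rightarrow> ut5 \<Rightarrow> bool" where
  "in_K_quad m d (U x1 x2 x3 x4 x5 x6 x7 x8 x9 x10) \<longleftrightarrow>
     x1 = 0 \<and> x2 = 0 \<and> x3 = 0 \<and> x4 = 0 \<and> m dvd x5 \<and> m dvd x6 \<and> x6 + x7 = 0 \<and> m dvd x8 \<and>
     even (x9 - x6) \<and> d dvd x10"

abbreviation K_quad :: "int \<Rightarrow> int \<Rightarrow> ut5 set" where
  "K_quad m d \<equiv> {u. in_K_quad m d u}"

lemma K_quad_memE:
  assumes "u \<in> K_quad m d"
  obtains x5 x6 x8 x9 x10 where "u = U 0 0 0 0 x5 x6 (- x6) x8 x9 x10"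
    and "m dvd x5" "m dvd x6" "m dvd x8" "even (x9 - x6)" "d dvd x10"
proof (cases u)
  case (U x1 x2 x3 x4 x5 x6 x7 x8 x9 x10)
  with assms have h: "x1 = 0" "x2 = 0" "x3 = 0" "x4 = 0" "x6 + x7 = 0"
    "m dvd x5" "m dvd x6" "m dvd x8" "even (x9 - x6)" "d dvd x10"
    by simp_all
  then have "x7 = - x6"
    by simp
  with U h show ?thesis
    by (intro that[of x5 x6 x8 x9 x10]) simp_all
qed

lemma subgroup_K_quad:
  assumes d: "d dvd m" "d dvd 2"
  shows "subgroup (K_quad m d) UT"
proof (rule UT.subgroupI)
  have "uone \<in> K_quad m d"
    by (simp add: uone_def)
  then show "K_quad m d \<noteq> {}"
    by blast
next
  fix a
  assume "a \<in> K_quad m d"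
  then obtain x5 x6 x8 x9 x10 where a: "a = U 0 0 0 0 x5 x6 (- x6) x8 x9 x10"
    and h: "m dvd x5" "m dvd x6" "m dvd x8" "even (x9 - x6)" "d dvd x10"
    by (rule K_quad_memE)
  have "d dvd x5"
    using h(1) d(1) by (rule dvd_trans[rotated])
  then have "d dvd - x10 + x5 * - x6"
    using h by (simp add: dvd_simps)
  moreover have "even (- x9 + x6)"
    using h(4) by (simp add: algebra_simps)
  ultimately show "inv\<^bsub>UT\<^esub> a \<in> K_quad m d"
    using a h by (simp add: Let_def algebra_simps)
next
  fix a b
  assume "a \<in> K_quad m d" "b \<in> K_quad m d"
  obtain x5 x6 x8 x9 x10 where a: "a = U 0 0 0 0 x5 x6 (- x6) x8 x9 x10"
    and ha: "m dvd x5" "m dvd x6" "m dvd x8" "even (x9 - x6)" "d dvd x10"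
    using \<open>a \<in> K_quad m d\<close> by (rule K_quad_memE)
  obtain y5 y6 y8 y9 y10 where b: "b = U 0 0 0 0 y5 y6 (- y6) y8 y9 y10"
    and hb: "m dvd y5" "m dvd y6" "m dvd y8" "even (y9 - y6)" "d dvd y10"
    using \<open>b \<in> K_quad m d\<close> by (rule K_quad_memE)
  have "d dvd x5"
    using ha(1) d(1) by (rule dvd_trans[rotated])
  then have "d dvd x10 + y10 + x5 * - y6"
    using ha hb by (simp add: dvd_simps)
  moreover have "even ((x9 - x6) + (y9 - y6))"
    using ha hb by simp
  ultimately show "a \<otimes>\<^bsub>UT\<^esub> b \<in> K_quad m d"
    using a b ha hb by (simp add: algebra_simps)
qed simp

lemma normalizes_K_quad:
  assumes d: "d dvd m" "d dvd 2"
  shows "normalizes UT {uone, E12, E23_45, E34} (K_quad m d)"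
  unfolding normalizes_def
proof (intro ballI)
  fix x k
  assume x: "x \<in> {uone, E12, E23_45, E34}" and "k \<in> K_quad m d"
  from \<open>k \<in> K_quad m d\<close> obtain x5 x6 x8 x9 x10 where k: "k = U 0 0 0 0 x5 x6 (- x6) x8 x9 x10"
    and h: "m dvd x5" "m dvd x6" "m dvd x8" "even (x9 - x6)" "d dvd x10"
    by (rule K_quad_memE)
  have d6: "d dvd x6" and d8: "d dvd x8"
    using h d dvd_trans by blast+
  moreover have "d dvd x9"
    using h(4) d(2) d6 by (metis dvd_add dvd_trans diff_add_cancel)
  ultimately have "d dvd x10 - x9" "d dvd x10 + x9" "d dvd x10 - x8" "d dvd x10 + x8"
    using h by simp_all
  moreover have "m dvd x8 - x6" "m dvd x8 + x6" "m dvd x8 - x5" "m dvd x8 + x5"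
    using h by simp_all
  moreover have "even (x9 + x6 - x6 - x6)" "even (x9 - x6 - x6 + x6)"
    using h(4) by (simp_all add: algebra_simps)
  ultimately show "x \<otimes>\<^bsub>UT\<^esub> k \<otimes>\<^bsub>UT\<^esub> inv\<^bsub>UT\<^esub> x \<in> K_quad m d \<and> inv\<^bsub>UT\<^esub> x \<otimes>\<^bsub>UT\<^esub> k \<otimes>\<^bsub>UT\<^esub> x \<in> K_quad m d"
    using x k h by (auto simp: elementary_defs algebra_simps)
qed

definition test12 :: "nat \<Rightarrow> nat \<times> bool \<Rightarrow> ut5" where
  "test12 i = (\<lambda>(p, x). if p = i then E12 else if p = i+1 then E23_45 else if p = i+2 then E34 else uone)"

definition test13 :: "nat \<Rightarrow> nat \<times> bool \<Rightarrow> ut5" where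
  "test13 i = (\<lambda>(p, x). if x then uone else test12 i (p, x))"

lemma admissible_test12: "admissible UT (test12 i) (K_quad (int m2) (int (gcd 2 m2))) n m1 m2"
proof (rule admissible_UTI[OF subgroup_K_quad normalizes_K_quad])
  show "range (test12 i) \<subseteq> {uone, E12, E23_45, E34}"
    by (auto simp: test12_def)
  fix r q
  assume "r \<in> relators UT (test12 i) n m1 m2"
  then show "comm UT r (test12 i q) \<in> K_quad (int m2) (int (gcd 2 m2))"
    using int_gcd_two_dvd[of m2]
    unfolding relators_def
    apply (cases q)
    apply (elim UnE CollectE exE conjE)
    apply (auto simp: test12_def elementary_defs UT_comm_simps)
    apply (simp_all add: algebra_simps dvd_simps)?
    done
qed (rule int_gcd_two_dvd)+

lemma tag_elem_test12_mem:
  "tag_in_range n t \<Longrightarrow> t \<noteq> T12 i \<Longrightarrow> tag_elem UT (test12 i) t \<in> K_quad m d"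
  by (cases t) (auto simp: test12_def elementary_defs UT_comm_simps)

lemma tag_elem_test12_target:
  "tag_elem UT (test12 i) (T12 i) = U 0 0 0 0 0 0 0 0 0 1"
  by (simp add: test12_def elementary_defs UT_comm_simps)

lemma admissible_test13: "admissible UT (test13 i) (K_quad (int m1) (int (gcd 2 m1))) n m1 m2"
proof (rule admissible_UTI[OF subgroup_K_quad normalizes_K_quad])
  show "range (test13 i) \<subseteq> {uone, E12, E23_45, E34}"
    by (auto simp: test13_def test12_def split: if_splits)
  fix r q
  assume "r \<in> relators UT (test13 i) n m1 m2"
  then show "comm UT r (test13 i q) \<in> K_quad (int m1) (int (gcd 2 m1))"
    using int_gcd_two_dvd[of m1]
    unfolding relators_def
    apply (cases q)
    apply (elim UnE CollectE exE conjE)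
    apply (auto simp: test13_def test12_def elementary_defs UT_comm_simps)
    apply (simp_all add: algebra_simps dvd_simps)?
    done
qed (rule int_gcd_two_dvd)+

lemma tag_elem_test13_mem:
  "tag_in_range n t \<Longrightarrow> t \<noteq> T13 i \<Longrightarrow> t \<noteq> T12 i \<Longrightarrow> tag_elem UT (test13 i) t \<in> K_quad m d"
  by (cases t) (auto simp: test13_def test12_def elementary_defs UT_comm_simps)

lemma tag_elem_test13_target:
  "tag_elem UT (test13 i) (T13 i) = U 0 0 0 0 0 0 0 0 0 (- 1)"
  "tag_elem UT (test13 i) (T12 i) = U 0 0 0 0 0 0 0 0 0 1"
  by (simp_all add: test13_def test12_def elementary_defs UT_comm_simps)

context exponent_relation
begin

lemma scaled_corner_mem:
  assumes adm: "admissible UT g K n m1 m2" and k: "k < length (tags n)" and "tags n ! k = t"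
    and drop: "\<And>t'. tag_in_range n t' \<Longrightarrow> t' \<noteq> t \<Longrightarrow> tag_elem UT g t' \<in> K"
    and target: "tag_elem UT g t = U 0 0 0 0 0 0 0 a b c"
  shows "U 0 0 0 0 0 0 0 (e k * a) (e k * b) (e k * c) \<in> K"
  using tag_power_mem[OF group_UT adm _ k] assms by (simp add: set_tags UT_int_pow_corner)

lemma scaled_corner_sum_mem:
  assumes adm: "admissible UT g K n m1 m2"
    and k: "k < length (tags n)" "tags n ! k = t" and k': "k' < length (tags n)" "tags n ! k' = t'"
    and "t \<noteq> t'"
    and drop: "\<And>s. tag_in_range n s \<Longrightarrow> s \<noteq> t \<Longrightarrow> s \<noteq> t' \<Longrightarrow> tag_elem UT g s \<in> K"
    and target: "tag_elem UT g t = U 0 0 0 0 0 0 0 a b c" "tag_elem UT g t' = U 0 0 0 0 0 0 0 a' b' c'"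
  shows "U 0 0 0 0 0 0 0 (e k * a + e k' * a') (e k * b + e k' * b') (e k * c + e k' * c') \<in> K"
proof -
  have "k \<noteq> k'"
    using k k' \<open>t \<noteq> t'\<close> by auto
  then show ?thesis
    using tag_power_pair_mem[OF group_UT adm _ k(1) k'(1)] assms by (auto simp: set_tags UT_int_pow_corner algebra_simps)
qed

lemma tags_nth_in_range: "k < length (tags n) \<Longrightarrow> tag_in_range n (tags n ! k)"
  using nth_mem set_tags by blast

lemma obtain_tag_index:
  assumes "tag_in_range n t"
  obtains k where "k < length (tags n)" "tags n ! k = t"
  using assms by (metis in_set_conv_nth mem_Collect_eq set_tags)

lemma dvd_T1: "k < length (tags n) \<Longrightarrow> tags n ! k = T1 i \<Longrightarrow> int m1 dvd e k"
  using scaled_corner_mem[OF admissible_test1[OF m1_dvd_m2] _ _ tag_elem_test1_mem tag_elem_test1_target]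
  by simp

lemma dvd_T2:
  assumes k: "k < length (tags n)" and t: "tags n ! k = T2 i j"
  shows "int m2 dvd e k"
proof -
  have "i + 2 \<le> j"
    using tags_nth_in_range[OF k] t by simp
  then show ?thesis
    using scaled_corner_mem[OF admissible_test2[OF m1_dvd_m2] k t tag_elem_test2_mem tag_elem_test2_target]
    by simp
qed

lemma dvd_T3:
  assumes k: "k < length (tags n)" and t: "tags n ! k = T3 i j"
  shows "int m1 dvd e k"
proof -
  have "i + 2 \<le> j"
    using tags_nth_in_range[OF k] t by simp
  then show ?thesis
    using scaled_corner_mem[OF admissible_test3[OF m1_dvd_m2] k t tag_elem_test3_mem tag_elem_test3_target]
    by simp
qed

lemma dvd_T4:
  assumes k: "k < length (tags n)" and t: "tags n ! k = T4 i j"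
  shows "int m1 dvd e k"
proof -
  have "i + 2 \<le> j"
    using tags_nth_in_range[OF k] t by simp
  then show ?thesis
    using scaled_corner_mem[OF admissible_test4[OF m1_dvd_m2] k t tag_elem_test4_mem tag_elem_test4_target]
    by simp
qed

lemma dvd_T5:
  assumes k: "k < length (tags n)" and t: "tags n ! k = T5 i j"
  shows "int m1 dvd e k"
proof -
  have "i + 2 \<le> j"
    using tags_nth_in_range[OF k] t by simp
  then show ?thesis
    using scaled_corner_mem[OF admissible_test5[OF m1_dvd_m2] k t tag_elem_test5_mem tag_elem_test5_target]
    by simp
qed

lemma dvd_T6: "k < length (tags n) \<Longrightarrow> tags n ! k = T6 i \<Longrightarrow> int m1 dvd e k"
  using scaled_corner_mem[OF admissible_test6[OF m1_dvd_m2] _ _ tag_elem_test6_mem tag_elem_test6_target]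
  by simp

lemma dvd_T7: "k < length (tags n) \<Longrightarrow> tags n ! k = T7 i \<Longrightarrow> int m1 dvd e k"
  using scaled_corner_mem[OF admissible_test7[OF m1_dvd_m2] _ _ tag_elem_test7_mem tag_elem_test7_target]
  by simp

lemma dvd_T8: "k < length (tags n) \<Longrightarrow> tags n ! k = T8 i \<Longrightarrow> int m2 dvd e k"
  using scaled_corner_mem[OF admissible_test8[OF m2_pos] _ _ tag_elem_test8_mem[OF m2_pos]
      tag_elem_test8_target]
  by simp

lemma dvd_T9: "k < length (tags n) \<Longrightarrow> tags n ! k = T9 i \<Longrightarrow> int (gcd m2 (m2 choose 2)) dvd e k"
  using scaled_corner_mem[OF admissible_test9 _ _ tag_elem_test9_mem tag_elem_test9_target]
  by simp

lemma dvd_T12: "k < length (tags n) \<Longrightarrow> tags n ! k = T12 i \<Longrightarrow> int (gcd 2 m2) dvd e k"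
  using scaled_corner_mem[OF admissible_test12 _ _ tag_elem_test12_mem tag_elem_test12_target]
  by simp

lemma dvd_T10:
  assumes k: "k < length (tags n)" and t: "tags n ! k = T10 i"
  shows "int m1 dvd e k"
proof -
  have "tag_in_range n (T8 i)"
    using tags_nth_in_range[OF k] t by simp
  then obtain k' where k': "k' < length (tags n)" "tags n ! k' = T8 i"
    by (rule obtain_tag_index)
  have "int m1 dvd e k - e k'"
    using scaled_corner_sum_mem[OF admissible_test10[OF m1_pos] k t k' _ tag_elem_test10_mem[OF m1_pos]
        tag_elem_test10_target] m1_pos
    by simp
  moreover have "int m1 dvd e k'"
    using dvd_T8[OF k'] m1_dvd_m2 by (meson dvd_trans int_dvd_int_iff)
  ultimately have "int m1 dvd (e k - e k') + e k'"
    by (rule dvd_add)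
  then show ?thesis
    by simp
qed

lemma dvd_T11:
  assumes k: "k < length (tags n)" and t: "tags n ! k = T11 i"
  shows "int (gcd m1 (m1 choose 2)) dvd e k"
proof -
  have "tag_in_range n (T9 i)"
    using tags_nth_in_range[OF k] t by simp
  then obtain k' where k': "k' < length (tags n)" "tags n ! k' = T9 i"
    by (rule obtain_tag_index)
  have "int (gcd m1 (m1 choose 2)) dvd e k + e k'"
    using scaled_corner_sum_mem[OF admissible_test11 k t k' _ tag_elem_test11_mem tag_elem_test11_target]
    by simp
  moreover have "int (gcd m1 (m1 choose 2)) dvd e k'"
    using dvd_T9[OF k'] gcd_choose_two_dvd_gcd_choose_two[OF m1_dvd_m2]
    by (meson dvd_trans int_dvd_int_iff)
  ultimately have "int (gcd m1 (m1 choose 2)) dvd (e k + e k') - e k'"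
    by (rule dvd_diff)
  then show ?thesis
    by simp
qed

lemma dvd_T13:
  assumes k: "k < length (tags n)" and t: "tags n ! k = T13 i"
  shows "int (gcd 2 m1) dvd e k"
proof -
  have "tag_in_range n (T12 i)"
    using tags_nth_in_range[OF k] t by simp
  then obtain k' where k': "k' < length (tags n)" "tags n ! k' = T12 i"
    by (rule obtain_tag_index)
  have "int (gcd 2 m1) dvd e k' - e k"
    using scaled_corner_sum_mem[OF admissible_test13 k t k' _ tag_elem_test13_mem tag_elem_test13_target]
    by simp
  moreover have "gcd 2 m1 dvd gcd 2 m2"
    using gcd_mono[OF dvd_refl m1_dvd_m2] .
  then have "int (gcd 2 m1) dvd e k'"
    using dvd_T12[OF k'] by (meson dvd_trans int_dvd_int_iff)
  ultimately have "int (gcd 2 m1) dvd (e k' - e k) - e k'"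
    by (rule dvd_diff)
  then show ?thesis
    by simp
qed

lemma tag_modulus_dvd: "k < length (tags n) \<Longrightarrow> int (tag_modulus m1 m2 (tags n ! k)) dvd e k"
  by (cases "tags n ! k")
    (simp_all add: dvd_T1 dvd_T2 dvd_T3 dvd_T4 dvd_T5 dvd_T6 dvd_T7 dvd_T8 dvd_T9 dvd_T10
      dvd_T11 dvd_T12 dvd_T13)

end

theorem mainTheorem10:
  fixes n m1 m2 :: nat
  assumes "n \<ge> 3" and "0 < m1" and "0 < m2" and "m1 dvd m2"
  assumes "distinct ps" and "set ps = {..<length (elem_list n m1 m2)}"
  assumes "list_prod (FF n)
             (map (\<lambda>k. fst (elem_list n m1 m2 ! k) [^]\<^bsub>FF n\<^esub> (e k :: int)) ps)
           \<in> comm_subgroup (FF n) (RR n m1 m2) (carrier (FF n))"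
  shows "\<forall>k < length (elem_list n m1 m2). int (snd (elem_list n m1 m2 ! k)) dvd e k"
proof -
  interpret exponent_relation n m1 m2 ps e
    using assms by unfold_locales
  show ?thesis
    using tag_modulus_dvd by (simp add: elem_list_eq_tags)
qed

end
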